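(* Let $\pi$ be a probability measure on a measurable space $\mathsf{X}$, let $\{q(x,\cdot)\}_{x\in\mathsf{X}}$ be a Markov kernel of proposal distributions, and for each $x\in\mathsf{X}$ let $Q_{x}$ be a probability measure on $\mathbb{R}_{+}$ with $\int wQ_{x}(\mathrm{d}w)=1$; set $\tilde{\pi}_{x}(\mathrm{d}w):=wQ_{x}(\mathrm{d}w)$ and $\tilde{\pi}(\mathrm{d}x,\mathrm{d}w):=\pi(\mathrm{d}x)\tilde{\pi}_{x}(\mathrm{d}w)$ on $\mathsf{E}:=\mathsf{X}\times\mathbb{R}_{+}$. Let $\mathfrak{r}(x,y):=\frac{\pi(\mathrm{d}y)q(y,\mathrm{d}x)}{\pi(\mathrm{d}x)q(x,\mathrm{d}y)}$ and $a(x,y):=1\wedge\mathfrak{r}(x,y)$. Define the pseudo-marginal kernel \[ \tilde{P}(x,w;\mathrm{d}y,\mathrm{d}u):=\Big[1\wedge\Big\{\mathfrak{r}(x,y)\frac{u}{w}\Big\}\Big]q(x,\mathrm{d}y)Q_{y}(\mathrm{d}u)+\delta_{(x,w)}(\mathrm{d}y,\mathrm{d}u)\tilde{\rho}(x,w), \] and the embedded marginal kernel \[ \bar{P}(x,w;\mathrm{d}y,\mathrm{d}u):=a(x,y)q(x,\mathrm{d}y)\tilde{\pi}_{y}(\mathrm{d}u)+\delta_{(x,w)}(\mathrm{d}y,\mathrm{d}u)\rho(x), \] where $\tilde{\rho}(x,w)$ and $\rho(x)=1-\int a(x,y)q(x,\mathrm{d}y)$ are the rejection probabilities making these Markov kernels.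 Then for any $p\in(1,\infty]$, $q\ge1$ with $p^{-1}+q^{-1}=1$, any $s>0$ and any $f\in\mathrm{L}_{0}^{2p}(\tilde{\pi})$, \[ \mathcal{E}(\bar{P},f)\le s\,\mathcal{E}(\tilde{P},f)+\Phi_{p}(f)\Big(\int_{\mathsf{X}}\tilde{\pi}_{x}(w\ge s)\,\pi(\mathrm{d}x)\Big)^{1/q}, \] where $\Phi_{p}(f):=4\|f\|_{2p}^{2}$ for $p\in(1,\infty)$ and $\Phi_{\infty}(f):=\|f\|_{\mathrm{osc}}^{2}$.
   Context: All norms, $\mathrm{L}^{r}$ spaces and Dirichlet forms are with respect to $\tilde{\pi}$: $\|f\|_{r}=(\int|f|^{r}\mathrm{d}\tilde{\pi})^{1/r}$, $\mathrm{L}_{0}^{r}(\tilde{\pi})$ consists of $f$ with finite $r$-norm and $\tilde{\pi}(f)=0$, $\|f\|_{\mathrm{osc}}$ is the $\tilde{\pi}$-essential supremum minus essential infimum, and $\mathcal{E}(T,f)=\langle(\mathrm{Id}-T)f,f\rangle_{\mathrm{L}^{2}(\tilde{\pi})}$. $\mathfrak{r}$ is the Radon–Nikodym derivative of $\pi(\mathrm{d}y)q(y,\mathrm{d}x)$ with respect to $\pi(\mathrm{d}x)q(x,\mathrm{d}y)$ (Metropolis–Hastings ratio). Both $\tilde{P}$ and $\bar{P}$ are $\tilde{\pi}$-invariant. *)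

theory Defs
  imports "HOL-Probability.Probability"
begin

definition pitilde_x :: "('a \<Rightarrow> real measure) \<Rightarrow> 'a \<Rightarrow> real measure" where
  "pitilde_x Q x = density (Q x) (\<lambda>w. ennreal w)"

definition pitilde :: "'a measure \<Rightarrow> ('a \<Rightarrow> real measure) \<Rightarrow> ('a \<times> real) measure" where
  "pitilde \<pi> Q = \<pi> \<bind> (\<lambda>x. distr (pitilde_x Q x) (\<pi> \<Otimes>\<^sub>M borel) (\<lambda>w. (x, w)))"

definition prop_joint :: "'a measure \<Rightarrow> ('a \<Rightarrow> 'a measure) \<Rightarrow> ('a \<times> 'a) measure" where
  "prop_joint \<pi> q = \<pi> \<bind> (\<lambda>x. distr (q x) (\<pi> \<Otimes>\<^sub>M \<pi>) (\<lambda>y. (x, y)))"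

definition rev_joint :: "'a measure \<Rightarrow> ('a \<Rightarrow> 'a measure) \<Rightarrow> ('a \<times> 'a) measure" where
  "rev_joint \<pi> q = distr (prop_joint \<pi> q) (\<pi> \<Otimes>\<^sub>M \<pi>) (\<lambda>(x, y). (y, x))"

definition mh_ratio :: "'a measure \<Rightarrow> ('a \<Rightarrow> 'a measure) \<Rightarrow> 'a \<Rightarrow> 'a \<Rightarrow> real" where
  "mh_ratio \<pi> q x y = enn2real (RN_deriv (prop_joint \<pi> q) (rev_joint \<pi> q) (x, y))"

definition mh_accept :: "'a measure \<Rightarrow> ('a \<Rightarrow> 'a measure) \<Rightarrow> 'a \<Rightarrow> 'a \<Rightarrow> real" where
  "mh_accept \<pi> q x y = min 1 (mh_ratio \<pi> q x y)"

definition mh_kernel :: "'b measure \<Rightarrow> ('b \<Rightarrow> 'b measure) \<Rightarrow> ('b \<Rightarrow> 'b \<Rightarrow> real) \<Rightarrow> 'b \<Rightarrow> 'b measure" where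
  "mh_kernel E K \<alpha> z = measure_of (space E) (sets E)
     (\<lambda>A. (\<integral>\<^sup>+ z'. ennreal (\<alpha> z z') * indicator A z' \<partial>K z)
          + indicator A z * ennreal (1 - (\<integral> z'. \<alpha> z z' \<partial>K z)))"

definition Ptilde :: "'a measure \<Rightarrow> ('a \<Rightarrow> 'a measure) \<Rightarrow> ('a \<Rightarrow> real measure) \<Rightarrow> 'a \<times> real \<Rightarrow> ('a \<times> real) measure" where
  "Ptilde \<pi> q Q = mh_kernel (\<pi> \<Otimes>\<^sub>M borel)
     (\<lambda>(x, w). q x \<bind> (\<lambda>y. distr (Q y) (\<pi> \<Otimes>\<^sub>M borel) (\<lambda>u. (y, u))))
     (\<lambda>(x, w) (y, u). min 1 (mh_ratio \<pi> q x y * (u / w)))"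

definition Pbar :: "'a measure \<Rightarrow> ('a \<Rightarrow> 'a measure) \<Rightarrow> ('a \<Rightarrow> real measure) \<Rightarrow> 'a \<times> real \<Rightarrow> ('a \<times> real) measure" where
  "Pbar \<pi> q Q = mh_kernel (\<pi> \<Otimes>\<^sub>M borel)
     (\<lambda>(x, w). q x \<bind> (\<lambda>y. distr (pitilde_x Q y) (\<pi> \<Otimes>\<^sub>M borel) (\<lambda>u. (y, u))))
     (\<lambda>(x, w) (y, u). mh_accept \<pi> q x y)"

definition dirichlet :: "'b measure \<Rightarrow> ('b \<Rightarrow> 'b measure) \<Rightarrow> ('b \<Rightarrow> real) \<Rightarrow> real" where
  "dirichlet \<mu> T f = (\<integral> z. (f z - (\<integral> z'. f z' \<partial>T z)) * f z \<partial>\<mu>)"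

definition lpnorm :: "'b measure \<Rightarrow> real \<Rightarrow> ('b \<Rightarrow> real) \<Rightarrow> real" where
  "lpnorm \<mu> r f = (\<integral> z. \<bar>f z\<bar> powr r \<partial>\<mu>) powr (1 / r)"

definition oscnorm :: "'b measure \<Rightarrow> ('b \<Rightarrow> real) \<Rightarrow> real" where
  "oscnorm \<mu> f = real_of_ereal (esssup \<mu> (\<lambda>z. ereal (f z)) + esssup \<mu> (\<lambda>z. ereal (- f z)))"

definition L0_2p :: "'b measure \<Rightarrow> ereal \<Rightarrow> ('b \<Rightarrow> real) \<Rightarrow> bool" where
  "L0_2p \<mu> p f \<longleftrightarrow> f \<in> borel_measurable \<mu> \<and>
     (if p = \<infinity> then esssup \<mu> (\<lambda>z. ereal \<bar>f z\<bar>) < \<infinity>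
      else integrable \<mu> (\<lambda>z. \<bar>f z\<bar> powr (2 * real_of_ereal p))) \<and>
     integrable \<mu> f \<and> (\<integral> z. f z \<partial>\<mu>) = 0"

definition Phi :: "'b measure \<Rightarrow> ereal \<Rightarrow> ('b \<Rightarrow> real) \<Rightarrow> real" where
  "Phi \<mu> p f = (if p = \<infinity> then (oscnorm \<mu> f)\<^sup>2 else 4 * (lpnorm \<mu> (2 * real_of_ereal p) f)\<^sup>2)"

end

theory Submission
  imports Defs
begin

text \<open>Both kernels are Metropolis-type kernels on \<open>E = X \<times> \<real>\<close> that are reversible with
  respect to \<open>pitilde \<pi> Q\<close>, so each Dirichlet form is half the integral of \<open>(f z - f z')\<^sup>2\<close>
  against the symmetric edge measure \<open>pitilde \<pi> Q (dz) K(z, dz') \<alpha>(z, z')\<close>. Both edge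
  measures are \<open>\<pi>(dx) Q\<^sub>x(dw) q(x, dy) Q\<^sub>y(du)\<close> times a weight, and when \<open>w, u \<le> s\<close> the
  embedded weight \<open>w u min 1 r\<close> is at most \<open>s\<close> times the pseudo-marginal weight
  \<open>w min 1 (r u / w)\<close>. On the remaining pairs one of the two weights is at least \<open>s\<close>; there
  \<open>(f z - f z')\<^sup>2 \<le> 2 f(z)\<^sup>2 + 2 f(z')\<^sup>2\<close>, and Hoelder's inequality against the mass of
  \<open>{w \<ge> s}\<close>, or the oscillation of \<open>f\<close> when \<open>p = \<infinity>\<close>, bounds their contribution.\<close>

lemma nn_integral_swap_sigma_finite:
  assumes "sigma_finite_measure A" "sigma_finite_measure B"
    and "case_prod f \<in> borel_measurable (A \<Otimes>\<^sub>M B)"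
  shows "(\<integral>\<^sup>+y. \<integral>\<^sup>+x. f x y \<partial>A \<partial>B) = (\<integral>\<^sup>+x. \<integral>\<^sup>+y. f x y \<partial>B \<partial>A)"
proof -
  interpret pair_sigma_finite A B
    using assms(1,2) by (simp add: pair_sigma_finite_def)
  show ?thesis by (rule Fubini'[OF assms(3)])
qed

lemma integral_kernel_measurable:
  fixes g :: "'a \<Rightarrow> 'b \<Rightarrow> real"
  assumes K[measurable]: "K \<in> M \<rightarrow>\<^sub>M subprob_algebra N"
    and g[measurable]: "(\<lambda>(x, y). g x y) \<in> borel_measurable (M \<Otimes>\<^sub>M N)"
  shows "(\<lambda>x. \<integral>y. g x y \<partial>K x) \<in> borel_measurable M"
proof -
  have "(\<lambda>x. distr (K x) (M \<Otimes>\<^sub>M N) (Pair x)) \<in> M \<rightarrow>\<^sub>M subprob_algebra (M \<Otimes>\<^sub>M N)"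
    by (rule measurable_distr2[OF _ K]) simp
  then have "(\<lambda>x. \<integral>p. (\<lambda>(x, y). g x y) p \<partial>distr (K x) (M \<Otimes>\<^sub>M N) (Pair x)) \<in> borel_measurable M"
    by (rule measurable_compose[OF _ integral_measurable_subprob_algebra[OF g]])
  then show ?thesis
  proof (rule measurable_cong[THEN iffD1, rotated])
    fix x assume x: "x \<in> space M"
    have "sets (K x) = sets N"
      using measurable_space[OF K x] by (simp add: space_subprob_algebra)
    then show "(\<integral>p. (\<lambda>(x, y). g x y) p \<partial>distr (K x) (M \<Otimes>\<^sub>M N) (Pair x)) = (\<integral>y. g x y \<partial>K x)"
      using x by (subst integral_distr) (auto cong: measurable_cong_sets)
  qed
qed

lemma Youngs_inequality_unit_factor:
  fixes F G a c p q :: real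
  assumes p: "1 < p" and q: "1 < q" and pq: "1 / p + 1 / q = 1"
    and F: "0 \<le> F" and G: "0 \<le> G" "G \<le> 1" and a: "0 < a" and c: "0 < c"
  shows "F * G \<le> a * c * (F powr p / (p * a powr p) + G / (q * c powr q))"
proof -
  have "(F / a) * (G / c) \<le> (F / a) powr p / p + (G / c) powr q / q"
    by (rule Youngs_inequality) (use p q pq F G a c in auto)
  also have "(F / a) powr p = F powr p / a powr p"
    using F a by (simp add: powr_divide)
  also have "(G / c) powr q = G powr q / c powr q"
    using G c by (simp add: powr_divide)
  also have "G powr q / c powr q / q \<le> G / (q * c powr q)"
    using powr_le_one_le[of G q] G q c
    by (cases "G = 0") (simp_all add: divide_right_mono field_simps)
  finally show ?thesis
    using a c by (simp add: field_simps)
qed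

text \<open>Because \<open>0 \<le> G \<le> 1\<close>, the usual factor \<open>(\<integral> G\<^sup>q)\<^sup>1\<^sup>/\<^sup>q\<close> can be replaced by
  \<open>(\<integral> G)\<^sup>1\<^sup>/\<^sup>q\<close>.\<close>
lemma Holder_inequality_unit_factor:
  fixes F G :: "'b \<Rightarrow> real" and p q :: real
  assumes N: "finite_measure N" and p: "1 < p" and pq: "1 / p + 1 / q = 1"
    and Fm: "F \<in> borel_measurable N" and F0: "\<And>x. 0 \<le> F x" and Fi: "integrable N (\<lambda>x. F x powr p)"
    and Gm: "G \<in> borel_measurable N" and G0: "\<And>x. 0 \<le> G x" and G1: "\<And>x. G x \<le> 1"
  shows "(\<integral>\<^sup>+x. ennreal (F x * G x) \<partial>N)
    \<le> ennreal ((\<integral>x. F x powr p \<partial>N) powr (1 / p) * (\<integral>x. G x \<partial>N) powr (1 / q))"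
proof -
  interpret finite_measure N by fact
  have "1 / q = 1 - 1 / p"
    using pq by simp
  then have "0 < 1 / q" "1 / q < 1"
    using p by simp_all
  then have q: "1 < q"
    by (simp add: zero_less_divide_1_iff divide_less_eq_1)
  have Gi: "integrable N G"
    by (rule Bochner_Integration.integrable_bound[OF integrable_const[of "1::real"] Gm]) (use G0 G1 in auto)
  define A where "A = (\<integral>x. F x powr p \<partial>N)"
  define C where "C = (\<integral>x. G x \<partial>N)"
  have A0: "0 \<le> A" unfolding A_def by (rule integral_nonneg_AE) simp
  have C0: "0 \<le> C" unfolding C_def by (rule integral_nonneg_AE) (simp add: G0)
  show ?thesis
  proof (cases "A = 0 \<or> C = 0")
    case True
    then have "AE x in N. F x powr p = 0 \<or> G x = 0"
      using integral_nonneg_eq_0_iff_AE[OF Fi] integral_nonneg_eq_0_iff_AE[OF Gi] G0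
      by (auto simp: A_def C_def elim: eventually_mono)
    then have "AE x in N. ennreal (F x * G x) = 0"
      by eventually_elim auto
    then have "(\<integral>\<^sup>+x. ennreal (F x * G x) \<partial>N) = 0"
      by (subst nn_integral_cong_AE[where v="\<lambda>_. 0"]) simp_all
    then show ?thesis by simp
  next
    case False
    then have Ap: "0 < A" and Cp: "0 < C" using A0 C0 by auto
    define a where "a = A powr (1 / p)"
    define c where "c = C powr (1 / q)"
    have ap: "0 < a" and cp: "0 < c" using Ap Cp by (auto simp: a_def c_def)
    have "a powr p = A" using Ap p by (simp add: a_def powr_powr)
    moreover have "c powr q = C" using Cp q by (simp add: c_def powr_powr)
    ultimately have pointwise: "F x * G x \<le> a * c * (F x powr p / (p * A) + G x / (q * C))" for x
      using Youngs_inequality_unit_factor[OF p q pq F0 G0 G1 ap cp] by simp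
    have "(\<integral>\<^sup>+x. ennreal (F x * G x) \<partial>N)
        \<le> (\<integral>\<^sup>+x. ennreal (a * c * (F x powr p / (p * A) + G x / (q * C))) \<partial>N)"
      by (rule nn_integral_mono) (rule ennreal_leI[OF pointwise])
    also have "\<dots> = ennreal (\<integral>x. a * c * (F x powr p / (p * A) + G x / (q * C)) \<partial>N)"
      using Fi Gi ap cp p q Ap Cp G0
      by (intro nn_integral_eq_integral) (auto intro!: add_nonneg_nonneg divide_nonneg_pos)
    also have "(\<integral>x. a * c * (F x powr p / (p * A) + G x / (q * C)) \<partial>N)
        = a * c * (A / (p * A) + C / (q * C))"
      using Fi Gi by (simp add: A_def C_def)
    also have "\<dots> = a * c"
      using Ap Cp pq by (simp add: field_simps)
    finally show ?thesis by (simp add: a_def c_def A_def C_def)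
  qed
qed

section \<open>Metropolis-type kernels\<close>

lemma sets_mh_kernel[simp, measurable_cong]: "sets (mh_kernel M K \<alpha> z) = sets M"
  unfolding mh_kernel_def by (simp add: sets.sigma_sets_eq sets.space_closed sets_measure_of)

lemma space_mh_kernel[simp]: "space (mh_kernel M K \<alpha> z) = space M"
  using sets_eq_imp_space_eq[OF sets_mh_kernel] .

lemma mh_kernel_cong_sets:
  assumes "sets M = sets N"
  shows "mh_kernel M = mh_kernel N"
proof -
  have "space M = space N"
    using assms by (rule sets_eq_imp_space_eq)
  then show ?thesis
    unfolding mh_kernel_def using assms by simp
qed

lemma emeasure_mh_kernel:
  assumes Ks: "sets (K z) = sets M" and am: "\<alpha> z \<in> borel_measurable M" and A: "A \<in> sets M"
  shows "emeasure (mh_kernel M K \<alpha> z) A =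
    (\<integral>\<^sup>+z'. ennreal (\<alpha> z z') * indicator A z' \<partial>K z) + indicator A z * ennreal (1 - (\<integral>z'. \<alpha> z z' \<partial>K z))"
proof -
  let ?c = "ennreal (1 - (\<integral>z'. \<alpha> z z' \<partial>K z))"
  let ?\<mu> = "\<lambda>A. (\<integral>\<^sup>+z'. ennreal (\<alpha> z z') * indicator A z' \<partial>K z) + indicator A z * ?c"
  have pos: "positive (sets M) ?\<mu>"
    by (simp add: positive_def)
  have ca: "countably_additive (sets M) ?\<mu>"
  proof (rule countably_additiveI)
    fix F :: "nat \<Rightarrow> _" assume F: "range F \<subseteq> sets M" "disjoint_family F"
    have "(\<Sum>i. ?\<mu> (F i)) =
        (\<Sum>i. \<integral>\<^sup>+z'. ennreal (\<alpha> z z') * indicator (F i) z' \<partial>K z) + (\<Sum>i. indicator (F i) z * ?c)"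
      by (subst suminf_add) (auto intro: summableI)
    also have "(\<Sum>i. \<integral>\<^sup>+z'. ennreal (\<alpha> z z') * indicator (F i) z' \<partial>K z)
        = (\<integral>\<^sup>+z'. (\<Sum>i. ennreal (\<alpha> z z') * indicator (F i) z') \<partial>K z)"
      by (rule nn_integral_suminf[symmetric]) (use F Ks am in \<open>auto cong: measurable_cong_sets\<close>)
    finally show "(\<Sum>i. ?\<mu> (F i)) = ?\<mu> (\<Union>i. F i)"
      using suminf_indicator[OF F(2)] by simp
  qed
  show ?thesis
    unfolding mh_kernel_def by (rule emeasure_measure_of_sigma[OF sets.sigma_algebra_axioms pos ca A])
qed

lemma nn_integral_mh_kernel:
  assumes z: "z \<in> space M" and Ks: "sets (K z) = sets M" and am: "\<alpha> z \<in> borel_measurable M"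
    and g: "g \<in> borel_measurable M"
  shows "(\<integral>\<^sup>+z'. g z' \<partial>mh_kernel M K \<alpha> z) =
    (\<integral>\<^sup>+z'. ennreal (\<alpha> z z') * g z' \<partial>K z) + g z * ennreal (1 - (\<integral>z'. \<alpha> z z' \<partial>K z))"
  using g
proof (induct rule: borel_measurable_induct)
  case (cong f g)
  have sp: "space (K z) = space M"
    using Ks by (rule sets_eq_imp_space_eq)
  have "(\<integral>\<^sup>+z'. f z' \<partial>mh_kernel M K \<alpha> z) = (\<integral>\<^sup>+z'. g z' \<partial>mh_kernel M K \<alpha> z)"
    by (rule nn_integral_cong) (use cong in simp)
  moreover have "(\<integral>\<^sup>+z'. ennreal (\<alpha> z z') * f z' \<partial>K z) = (\<integral>\<^sup>+z'. ennreal (\<alpha> z z') * g z' \<partial>K z)"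
    by (rule nn_integral_cong) (use cong sp in simp)
  ultimately show ?case
    using cong z by simp
next
  case (set A)
  then show ?case
    using emeasure_mh_kernel[of K z M \<alpha>, OF Ks am] by simp
next
  case (mult u c)
  have "u \<in> borel_measurable (mh_kernel M K \<alpha> z)"
    and m: "(\<lambda>z'. ennreal (\<alpha> z z') * u z') \<in> borel_measurable (K z)"
    using mult am Ks by (simp_all cong: measurable_cong_sets)
  then have "(\<integral>\<^sup>+z'. c * u z' \<partial>mh_kernel M K \<alpha> z) = c * (\<integral>\<^sup>+z'. u z' \<partial>mh_kernel M K \<alpha> z)"
    "(\<integral>\<^sup>+z'. ennreal (\<alpha> z z') * (c * u z') \<partial>K z) = c * (\<integral>\<^sup>+z'. ennreal (\<alpha> z z') * u z' \<partial>K z)"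
    using nn_integral_cmult[OF m, of c] by (simp_all add: nn_integral_cmult ac_simps)
  with mult show ?case
    by (simp add: algebra_simps)
next
  case (add u v)
  have "u \<in> borel_measurable (mh_kernel M K \<alpha> z)" "v \<in> borel_measurable (mh_kernel M K \<alpha> z)"
    "(\<lambda>z'. ennreal (\<alpha> z z') * u z') \<in> borel_measurable (K z)"
    "(\<lambda>z'. ennreal (\<alpha> z z') * v z') \<in> borel_measurable (K z)"
    using add am Ks by (simp_all cong: measurable_cong_sets)
  then have "(\<integral>\<^sup>+z'. v z' + u z' \<partial>mh_kernel M K \<alpha> z)
      = (\<integral>\<^sup>+z'. v z' \<partial>mh_kernel M K \<alpha> z) + (\<integral>\<^sup>+z'. u z' \<partial>mh_kernel M K \<alpha> z)"
    "(\<integral>\<^sup>+z'. ennreal (\<alpha> z z') * (v z' + u z') \<partial>K z)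
      = (\<integral>\<^sup>+z'. ennreal (\<alpha> z z') * v z' \<partial>K z) + (\<integral>\<^sup>+z'. ennreal (\<alpha> z z') * u z' \<partial>K z)"
    by (auto simp: distrib_left intro!: nn_integral_add)
  with add show ?case
    by (simp add: algebra_simps)
next
  case (seq U)
  let ?c = "ennreal (1 - (\<integral>z'. \<alpha> z z' \<partial>K z))"
  have m1: "\<And>i. U i \<in> borel_measurable (mh_kernel M K \<alpha> z)"
    and m2: "\<And>i. (\<lambda>z'. ennreal (\<alpha> z z') * U i z') \<in> borel_measurable (K z)"
    using seq am Ks by (simp_all cong: measurable_cong_sets)
  have inc: "incseq (\<lambda>i z'. ennreal (\<alpha> z z') * U i z')"
    using seq(4) by (auto simp: incseq_def le_fun_def intro!: mult_left_mono)
  have "(\<integral>\<^sup>+z'. (SUP i. U i) z' \<partial>mh_kernel M K \<alpha> z)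
      = (SUP i. (\<integral>\<^sup>+z'. ennreal (\<alpha> z z') * U i z' \<partial>K z) + U i z * ?c)"
    using nn_integral_monotone_convergence_SUP[OF seq(4) m1] seq(3) by (simp add: SUP_apply image_comp)
  also have "\<dots> = (SUP i. \<integral>\<^sup>+z'. ennreal (\<alpha> z z') * U i z' \<partial>K z) + (SUP i. U i z * ?c)"
  proof (rule ennreal_SUP_add)
    show "incseq (\<lambda>i. \<integral>\<^sup>+z'. ennreal (\<alpha> z z') * U i z' \<partial>K z)"
      using inc by (auto simp: incseq_def le_fun_def intro!: nn_integral_mono)
    show "incseq (\<lambda>i. U i z * ?c)"
      using seq(4) by (auto simp: incseq_def le_fun_def intro!: mult_right_mono)
  qed
  also have "(SUP i. \<integral>\<^sup>+z'. ennreal (\<alpha> z z') * U i z' \<partial>K z)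
      = (\<integral>\<^sup>+z'. ennreal (\<alpha> z z') * (SUP i. U i) z' \<partial>K z)"
    using nn_integral_monotone_convergence_SUP[OF inc m2]
    by (simp add: SUP_apply image_comp SUP_mult_left_ennreal)
  finally show ?case
    by (simp add: SUP_apply image_comp SUP_mult_right_ennreal)
qed

lemma integral_mh_kernel_nonneg:
  fixes M :: "'b measure" and h :: "'b \<Rightarrow> real"
  assumes z: "z \<in> space M" and Ks: "sets (K z) = sets M"
    and am: "\<alpha> z \<in> borel_measurable M"
    and h: "h \<in> borel_measurable M" "\<And>x. 0 \<le> h x"
    and fin: "(\<integral>\<^sup>+z'. ennreal (\<alpha> z z') * ennreal (h z') \<partial>K z) < \<infinity>"
  shows "integrable (mh_kernel M K \<alpha> z) h"
    and "integrable (K z) (\<lambda>z'. max 0 (\<alpha> z z') * h z')"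
    and "(\<integral>z'. h z' \<partial>mh_kernel M K \<alpha> z) =
       (\<integral>z'. max 0 (\<alpha> z z') * h z' \<partial>K z) + h z * max 0 (1 - (\<integral>z'. \<alpha> z z' \<partial>K z))"
proof -
  let ?c = "1 - (\<integral>z'. \<alpha> z z' \<partial>K z)"
  note sT = sets_mh_kernel
  have hm: "(\<lambda>x. ennreal (h x)) \<in> borel_measurable M" using h by simp
  have nn: "(\<integral>\<^sup>+z'. ennreal (h z') \<partial>mh_kernel M K \<alpha> z) =
      (\<integral>\<^sup>+z'. ennreal (\<alpha> z z') * ennreal (h z') \<partial>K z) + ennreal (h z) * ennreal ?c"
    by (rule nn_integral_mh_kernel[of z M K \<alpha>, OF z Ks am hm])
  have eq1: "(\<integral>\<^sup>+z'. ennreal (\<alpha> z z') * ennreal (h z') \<partial>K z) = (\<integral>\<^sup>+z'. ennreal (max 0 (\<alpha> z z') * h z') \<partial>K z)"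
    by (rule nn_integral_cong) (simp add: h ennreal_mult'' ennreal_max_0)
  have m2: "(\<lambda>z'. max 0 (\<alpha> z z') * h z') \<in> borel_measurable (K z)"
    using am h Ks by (simp cong: measurable_cong_sets)
  show i2: "integrable (K z) (\<lambda>z'. max 0 (\<alpha> z z') * h z')"
    by (rule integrableI_nonneg[OF m2]) (use fin eq1 h in auto)
  have eq2: "(\<integral>\<^sup>+z'. ennreal (max 0 (\<alpha> z z') * h z') \<partial>K z) = ennreal (\<integral>z'. max 0 (\<alpha> z z') * h z' \<partial>K z)"
    by (rule nn_integral_eq_integral[OF i2]) (simp add: h)
  have eq3: "ennreal (h z) * ennreal ?c = ennreal (h z * max 0 ?c)"
    by (simp add: h ennreal_mult' ennreal_max_0)
  have tot: "(\<integral>\<^sup>+z'. ennreal (h z') \<partial>mh_kernel M K \<alpha> z) =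
      ennreal ((\<integral>z'. max 0 (\<alpha> z z') * h z' \<partial>K z) + h z * max 0 ?c)"
    unfolding nn eq1 eq2 eq3
    by (subst ennreal_plus) (auto simp: h intro!: integral_nonneg_AE)
  have hmT: "h \<in> borel_measurable (mh_kernel M K \<alpha> z)" using h sT by (simp cong: measurable_cong_sets)
  show "integrable (mh_kernel M K \<alpha> z) h"
    by (rule integrableI_nonneg[OF hmT]) (use tot h in auto)
  show "(\<integral>z'. h z' \<partial>mh_kernel M K \<alpha> z) =
       (\<integral>z'. max 0 (\<alpha> z z') * h z' \<partial>K z) + h z * max 0 ?c"
  proof -
    have "(\<integral>z'. h z' \<partial>mh_kernel M K \<alpha> z) = enn2real (\<integral>\<^sup>+z'. ennreal (h z') \<partial>mh_kernel M K \<alpha> z)"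
      by (rule integral_eq_nn_integral[OF hmT]) (simp add: h)
    also have "\<dots> = enn2real (ennreal ((\<integral>z'. max 0 (\<alpha> z z') * h z' \<partial>K z) + h z * max 0 ?c))"
      by (simp only: tot)
    also have "\<dots> = (\<integral>z'. max 0 (\<alpha> z z') * h z' \<partial>K z) + h z * max 0 ?c"
      by (rule enn2real_ennreal) (auto simp: h intro!: integral_nonneg_AE)
    finally show ?thesis .
  qed
qed

lemma integral_mh_kernel:
  fixes M :: "'b measure" and f :: "'b \<Rightarrow> real"
  assumes z: "z \<in> space M" and Ks: "sets (K z) = sets M"
    and am: "\<alpha> z \<in> borel_measurable M"
    and f: "f \<in> borel_measurable M"
    and fin: "(\<integral>\<^sup>+z'. ennreal (\<alpha> z z') * ennreal \<bar>f z'\<bar> \<partial>K z) < \<infinity>"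
  shows "integrable (mh_kernel M K \<alpha> z) f"
    and "integrable (K z) (\<lambda>z'. max 0 (\<alpha> z z') * f z')"
    and "(\<integral>z'. f z' \<partial>mh_kernel M K \<alpha> z) =
       (\<integral>z'. max 0 (\<alpha> z z') * f z' \<partial>K z) + f z * max 0 (1 - (\<integral>z'. \<alpha> z z' \<partial>K z))"
proof -
  let ?p = "\<lambda>x. max 0 (f x)" and ?n = "\<lambda>x. max 0 (- f x)"
  have finp: "(\<integral>\<^sup>+z'. ennreal (\<alpha> z z') * ennreal (?p z') \<partial>K z) < \<infinity>"
    by (rule le_less_trans[OF _ fin], rule nn_integral_mono) (auto intro!: mult_left_mono)
  have finn: "(\<integral>\<^sup>+z'. ennreal (\<alpha> z z') * ennreal (?n z') \<partial>K z) < \<infinity>"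
    by (rule le_less_trans[OF _ fin], rule nn_integral_mono) (auto intro!: mult_left_mono)
  have mp: "?p \<in> borel_measurable M" and mn: "?n \<in> borel_measurable M" using f by auto
  have pp: "\<And>x. 0 \<le> ?p x" and nn0: "\<And>x. 0 \<le> ?n x" by auto
  note P = integral_mh_kernel_nonneg[of z M K \<alpha>, OF z Ks am mp pp finp] and N = integral_mh_kernel_nonneg[of z M K \<alpha>, OF z Ks am mn nn0 finn]
  have fe: "f = (\<lambda>x. ?p x - ?n x)" by (auto simp: fun_eq_iff)
  have fe2: "(\<lambda>z'. max 0 (\<alpha> z z') * f z') = (\<lambda>z'. max 0 (\<alpha> z z') * ?p z' - max 0 (\<alpha> z z') * ?n z')"
    by (rule ext) (simp add: max_def algebra_simps)
  show "integrable (mh_kernel M K \<alpha> z) f"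
    by (subst fe) (rule Bochner_Integration.integrable_diff[OF P(1) N(1)])
  show "integrable (K z) (\<lambda>z'. max 0 (\<alpha> z z') * f z')"
    by (subst fe2) (rule Bochner_Integration.integrable_diff[OF P(2) N(2)])
  have "(\<integral>z'. f z' \<partial>mh_kernel M K \<alpha> z) = (\<integral>z'. ?p z' \<partial>mh_kernel M K \<alpha> z) - (\<integral>z'. ?n z' \<partial>mh_kernel M K \<alpha> z)"
    by (subst fe) (rule Bochner_Integration.integral_diff[OF P(1) N(1)])
  also have "\<dots> = ((\<integral>z'. max 0 (\<alpha> z z') * ?p z' \<partial>K z) - (\<integral>z'. max 0 (\<alpha> z z') * ?n z' \<partial>K z))
      + (?p z - ?n z) * max 0 (1 - (\<integral>z'. \<alpha> z z' \<partial>K z))"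
    using P(3) N(3) by (simp add: algebra_simps)
  also have "(\<integral>z'. max 0 (\<alpha> z z') * ?p z' \<partial>K z) - (\<integral>z'. max 0 (\<alpha> z z') * ?n z' \<partial>K z) = (\<integral>z'. max 0 (\<alpha> z z') * f z' \<partial>K z)"
    by (subst fe2, rule Bochner_Integration.integral_diff[symmetric, OF P(2) N(2)])
  also have "?p z - ?n z = f z" by simp
  finally show "(\<integral>z'. f z' \<partial>mh_kernel M K \<alpha> z) =
       (\<integral>z'. max 0 (\<alpha> z z') * f z' \<partial>K z) + f z * max 0 (1 - (\<integral>z'. \<alpha> z z' \<partial>K z))" .
qed

lemma not_integrable_mh_kernel:
  fixes M :: "'b measure" and f :: "'b \<Rightarrow> real"
  assumes z: "z \<in> space M" and Ks: "sets (K z) = sets M"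
    and am: "\<alpha> z \<in> borel_measurable M"
    and f: "f \<in> borel_measurable M"
    and inf: "\<not> (\<integral>\<^sup>+z'. ennreal (\<alpha> z z') * ennreal \<bar>f z'\<bar> \<partial>K z) < \<infinity>"
  shows "\<not> integrable (mh_kernel M K \<alpha> z) f"
proof
  assume "integrable (mh_kernel M K \<alpha> z) f"
  then have "(\<integral>\<^sup>+z'. ennreal (norm (f z')) \<partial>mh_kernel M K \<alpha> z) < \<infinity>"
    by (simp add: integrable_iff_bounded)
  moreover have "(\<integral>\<^sup>+z'. ennreal (norm (f z')) \<partial>mh_kernel M K \<alpha> z) =
      (\<integral>\<^sup>+z'. ennreal (\<alpha> z z') * ennreal \<bar>f z'\<bar> \<partial>K z) + ennreal \<bar>f z\<bar> * ennreal (1 - (\<integral>z'. \<alpha> z z' \<partial>K z))"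
    using f by (subst nn_integral_mh_kernel[of z M K \<alpha>, OF z Ks am]) auto
  ultimately show False using inf by (simp add: top_unique)
qed
lemma measurable_integral_mh_kernel:
  fixes M :: "'b measure" and f :: "'b \<Rightarrow> real"
  assumes K[measurable]: "K \<in> M \<rightarrow>\<^sub>M subprob_algebra M"
    and am[measurable]: "(\<lambda>(z, z'). \<alpha> z z') \<in> borel_measurable (M \<Otimes>\<^sub>M M)"
    and f[measurable]: "f \<in> borel_measurable M"
  shows "(\<lambda>z. \<integral>z'. f z' \<partial>mh_kernel M K \<alpha> z) \<in> borel_measurable M"
proof -
  let ?F = "\<lambda>z. (\<integral>\<^sup>+z'. ennreal (\<alpha> z z') * ennreal \<bar>f z'\<bar> \<partial>K z)"
  let ?G = "\<lambda>z. if ?F z < \<infinity> then (\<integral>z'. max 0 (\<alpha> z z') * f z' \<partial>K z) + f z * max 0 (1 - (\<integral>z'. \<alpha> z z' \<partial>K z)) else 0"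
  have m1: "?F \<in> borel_measurable M"
    by (rule nn_integral_measurable_subprob_algebra2) measurable
  have m2: "(\<lambda>z. \<integral>z'. max 0 (\<alpha> z z') * f z' \<partial>K z) \<in> borel_measurable M"
    by (rule integral_kernel_measurable[OF K]) measurable
  have m3: "(\<lambda>z. \<integral>z'. \<alpha> z z' \<partial>K z) \<in> borel_measurable M"
    by (rule integral_kernel_measurable[OF K]) measurable
  have "?G \<in> borel_measurable M"
    using m1 m2 m3 by measurable
  then show ?thesis
  proof (rule measurable_cong[THEN iffD1, rotated])
    fix z assume z: "z \<in> space M"
    have Ks: "sets (K z) = sets M" using measurable_space[OF K z] by (simp add: space_subprob_algebra)
    have az: "\<alpha> z \<in> borel_measurable M" using z by measurable
    show "?G z = (\<integral>z'. f z' \<partial>mh_kernel M K \<alpha> z)"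
    proof (cases "?F z < \<infinity>")
      case True
      then show ?thesis using integral_mh_kernel(3)[of z M K \<alpha>, OF z Ks az f] by simp
    next
      case False
      then show ?thesis using not_integrable_mh_kernel[of z M K \<alpha>, OF z Ks az f]
        by (simp add: not_integrable_integral_eq)
    qed
  qed
qed

lemma mh_kernel_residual:
  fixes f :: "'b \<Rightarrow> real"
  assumes z: "z \<in> space M" and Kz: "prob_space (K z)" and Ks: "sets (K z) = sets M"
    and am: "\<alpha> z \<in> borel_measurable M" and f: "f \<in> borel_measurable M"
    and le1: "\<And>z'. \<alpha> z z' \<le> 1" and nonneg: "AE z' in K z. 0 \<le> \<alpha> z z'"
    and fi: "integrable (K z) (\<lambda>z'. max 0 (\<alpha> z z') * f z')"
  shows "f z - (\<integral>z'. f z' \<partial>mh_kernel M K \<alpha> z) = (\<integral>z'. max 0 (\<alpha> z z') * (f z - f z') \<partial>K z)"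
proof -
  interpret Kz: prob_space "K z" by (rule Kz)
  have amK: "(\<lambda>z'. \<alpha> z z') \<in> borel_measurable (K z)"
    using am Ks by (simp cong: measurable_cong_sets)
  have "(\<integral>\<^sup>+z'. ennreal (\<alpha> z z') * ennreal \<bar>f z'\<bar> \<partial>K z) = (\<integral>\<^sup>+z'. ennreal (norm (max 0 (\<alpha> z z') * f z')) \<partial>K z)"
    by (rule nn_integral_cong) (simp add: abs_mult ennreal_mult'' ennreal_max_0)
  also have "\<dots> < \<infinity>"
    using fi by (simp add: integrable_iff_bounded)
  finally have Tf: "(\<integral>z'. f z' \<partial>mh_kernel M K \<alpha> z)
      = (\<integral>z'. max 0 (\<alpha> z z') * f z' \<partial>K z) + f z * max 0 (1 - (\<integral>z'. \<alpha> z z' \<partial>K z))"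
    by (rule integral_mh_kernel(3)[of z M K \<alpha>, OF z Ks am f])
  have ia: "integrable (K z) (\<lambda>z'. max 0 (\<alpha> z z'))"
    by (rule Bochner_Integration.integrable_bound[OF Kz.integrable_const[of "1::real"]])
      (use amK le1 in \<open>auto intro!: AE_I2\<close>)
  define A where "A = (\<integral>z'. max 0 (\<alpha> z z') \<partial>K z)"
  have "(\<integral>z'. \<alpha> z z' \<partial>K z) = A"
    unfolding A_def by (rule integral_cong_AE) (use amK nonneg in auto)
  moreover have "A \<le> 1"
    using integral_mono[OF ia Kz.integrable_const[of 1]] le1 Kz.prob_space by (simp add: A_def)
  ultimately have c: "max 0 (1 - (\<integral>z'. \<alpha> z z' \<partial>K z)) = 1 - A"
    by simp
  define B where "B = (\<integral>z'. max 0 (\<alpha> z z') * f z' \<partial>K z)"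
  have "(\<integral>z'. max 0 (\<alpha> z z') * (f z - f z') \<partial>K z)
      = (\<integral>z'. f z * max 0 (\<alpha> z z') - max 0 (\<alpha> z z') * f z' \<partial>K z)"
    by (simp add: algebra_simps)
  also have "\<dots> = f z * A - B"
    using ia fi by (simp add: A_def B_def)
  finally show ?thesis
    unfolding Tf c B_def[symmetric] by (simp add: algebra_simps)
qed

lemma square_diff_le: "(a - b)\<^sup>2 \<le> 2 * a\<^sup>2 + 2 * b\<^sup>2" for a b :: real
proof -
  have "(a - b)\<^sup>2 + (a + b)\<^sup>2 = 2 * a\<^sup>2 + 2 * b\<^sup>2"
    by (simp add: power2_eq_square algebra_simps)
  then show ?thesis
    using zero_le_power2[of "a + b"] by linarith
qed

lemma abs_diff_mult_le: "\<bar>(a - b) * a\<bar> \<le> 2 * a\<^sup>2 + 2 * b\<^sup>2" for a b :: real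
proof -
  define t where "t = \<bar>a\<bar> * \<bar>b\<bar>"
  have "2 * t \<le> a\<^sup>2 + b\<^sup>2"
    using zero_le_power2[of "\<bar>a\<bar> - \<bar>b\<bar>"] by (simp add: t_def power2_eq_square algebra_simps)
  moreover have "\<bar>(a - b) * a\<bar> \<le> a\<^sup>2 + t"
    using abs_triangle_ineq4[of "a * a" "a * b"] by (simp add: t_def power2_eq_square algebra_simps abs_mult)
  ultimately show ?thesis
    using zero_le_power2[of a] zero_le_power2[of b] by linarith
qed

section \<open>Edge measures and Dirichlet forms\<close>

definition edge_measure :: "'b measure \<Rightarrow> ('b \<Rightarrow> 'b measure) \<Rightarrow> ('b \<Rightarrow> 'b \<Rightarrow> real) \<Rightarrow> ('b \<times> 'b) measure" where
  "edge_measure \<mu> K \<alpha> = density (\<mu> \<bind> (\<lambda>z. distr (K z) (\<mu> \<Otimes>\<^sub>M \<mu>) (Pair z))) (\<lambda>(z, z'). ennreal (\<alpha> z z'))"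

locale metropolis_kernel = prob_space \<mu> for \<mu> :: "'b measure" +
  fixes K :: "'b \<Rightarrow> 'b measure" and \<alpha> :: "'b \<Rightarrow> 'b \<Rightarrow> real"
  assumes kernel: "K \<in> \<mu> \<rightarrow>\<^sub>M prob_algebra \<mu>"
    and measurable_accept[measurable]: "(\<lambda>(z, z'). \<alpha> z z') \<in> borel_measurable (\<mu> \<Otimes>\<^sub>M \<mu>)"
    and accept_le_1: "\<And>z z'. \<alpha> z z' \<le> 1"
    and accept_nonneg_AE: "AE z in \<mu>. AE z' in K z. 0 \<le> \<alpha> z z'"
begin

abbreviation edge :: "('b \<times> 'b) measure" where
  "edge \<equiv> edge_measure \<mu> K \<alpha>"

lemma kernel_subprob[measurable]: "K \<in> \<mu> \<rightarrow>\<^sub>M subprob_algebra \<mu>"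
  using kernel by (rule measurable_prob_algebraD)

lemma prob_space_kernel: "z \<in> space \<mu> \<Longrightarrow> prob_space (K z)"
  and sets_kernel: "z \<in> space \<mu> \<Longrightarrow> sets (K z) = sets \<mu>"
  using measurable_space[OF kernel] by (auto simp: space_prob_algebra)

lemma pair_kernel: "(\<lambda>z. distr (K z) (\<mu> \<Otimes>\<^sub>M \<mu>) (Pair z)) \<in> \<mu> \<rightarrow>\<^sub>M subprob_algebra (\<mu> \<Otimes>\<^sub>M \<mu>)"
  by (rule measurable_distr2[OF _ kernel_subprob]) simp

lemma sets_edge[simp, measurable_cong]: "sets edge = sets (\<mu> \<Otimes>\<^sub>M \<mu>)"
  unfolding edge_measure_def using sets_bind_measurable[OF pair_kernel not_empty] by simp

lemma space_edge[simp]: "space edge = space (\<mu> \<Otimes>\<^sub>M \<mu>)"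
  using sets_eq_imp_space_eq[OF sets_edge] .

lemma nn_integral_edge:
  assumes h[measurable]: "h \<in> borel_measurable (\<mu> \<Otimes>\<^sub>M \<mu>)"
  shows "(\<integral>\<^sup>+p. h p \<partial>edge) = (\<integral>\<^sup>+z. \<integral>\<^sup>+z'. ennreal (\<alpha> z z') * h (z, z') \<partial>K z \<partial>\<mu>)"
proof -
  have sb: "sets (\<mu> \<bind> (\<lambda>z. distr (K z) (\<mu> \<Otimes>\<^sub>M \<mu>) (Pair z))) = sets (\<mu> \<Otimes>\<^sub>M \<mu>)"
    using sets_bind_measurable[OF pair_kernel not_empty] .
  have "(\<integral>\<^sup>+p. h p \<partial>edge)
      = (\<integral>\<^sup>+p. ennreal (\<alpha> (fst p) (snd p)) * h p \<partial>(\<mu> \<bind> (\<lambda>z. distr (K z) (\<mu> \<Otimes>\<^sub>M \<mu>) (Pair z))))"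
    unfolding edge_measure_def using sb
    by (subst nn_integral_density) (auto simp: case_prod_beta' cong: measurable_cong_sets)
  also have "\<dots> = (\<integral>\<^sup>+z. \<integral>\<^sup>+p. ennreal (\<alpha> (fst p) (snd p)) * h p \<partial>distr (K z) (\<mu> \<Otimes>\<^sub>M \<mu>) (Pair z) \<partial>\<mu>)"
    by (rule nn_integral_bind[OF _ pair_kernel]) measurable
  also have "\<dots> = (\<integral>\<^sup>+z. \<integral>\<^sup>+z'. ennreal (\<alpha> z z') * h (z, z') \<partial>K z \<partial>\<mu>)"
    using sets_kernel by (intro nn_integral_cong) (subst nn_integral_distr; simp cong: measurable_cong_sets)
  finally show ?thesis .
qed

lemma nn_integral_edge_fst_le:
  assumes [measurable]: "h \<in> borel_measurable \<mu>"
  shows "(\<integral>\<^sup>+p. h (fst p) \<partial>edge) \<le> (\<integral>\<^sup>+z. h z \<partial>\<mu>)"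
proof -
  have "(\<integral>\<^sup>+p. h (fst p) \<partial>edge) = (\<integral>\<^sup>+z. (\<integral>\<^sup>+z'. ennreal (\<alpha> z z') \<partial>K z) * h z \<partial>\<mu>)"
    using sets_kernel by (simp add: nn_integral_edge nn_integral_multc cong: nn_integral_cong measurable_cong_sets)
  also have "\<dots> \<le> (\<integral>\<^sup>+z. 1 * h z \<partial>\<mu>)"
  proof (intro nn_integral_mono mult_right_mono)
    fix z assume z: "z \<in> space \<mu>"
    have "(\<integral>\<^sup>+z'. ennreal (\<alpha> z z') \<partial>K z) \<le> (\<integral>\<^sup>+z'. 1 \<partial>K z)"
      by (rule nn_integral_mono) (simp add: accept_le_1)
    also have "\<dots> = 1"
      using prob_space.emeasure_space_1[OF prob_space_kernel[OF z]] by simp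
    finally show "(\<integral>\<^sup>+z'. ennreal (\<alpha> z z') \<partial>K z) \<le> 1" .
  qed simp
  finally show ?thesis
    by simp
qed

lemma integrable_edge_fst:
  fixes g :: "'b \<Rightarrow> real"
  assumes "integrable \<mu> g"
  shows "integrable edge (\<lambda>p. g (fst p))"
proof -
  have [measurable]: "g \<in> borel_measurable \<mu>"
    using assms by simp
  have "(\<integral>\<^sup>+p. ennreal (norm (g (fst p))) \<partial>edge) \<le> (\<integral>\<^sup>+z. ennreal (norm (g z)) \<partial>\<mu>)"
    by (rule nn_integral_edge_fst_le) measurable
  also have "\<dots> < \<infinity>"
    using assms by (simp add: integrable_iff_bounded)
  finally show ?thesis
    by (simp add: integrable_iff_bounded)
qed

lemma finite_measure_edge: "finite_measure edge"
proof
  have "emeasure edge (space edge) = (\<integral>\<^sup>+p. (\<lambda>_. 1) (fst p) \<partial>edge)"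
    by simp
  also have "\<dots> \<le> (\<integral>\<^sup>+z. 1 \<partial>\<mu>)"
    by (rule nn_integral_edge_fst_le) simp
  finally show "emeasure edge (space edge) \<noteq> \<infinity>"
    using emeasure_space_1 by (auto simp: top_unique)
qed

lemma integral_edge_fst_le:
  fixes g :: "'b \<Rightarrow> real"
  assumes g: "integrable \<mu> g" and g0: "\<And>z. 0 \<le> g z"
  shows "(\<integral>p. g (fst p) \<partial>edge) \<le> (\<integral>z. g z \<partial>\<mu>)"
proof -
  have [measurable]: "g \<in> borel_measurable \<mu>"
    using g by simp
  have "ennreal (\<integral>p. g (fst p) \<partial>edge) = (\<integral>\<^sup>+p. ennreal (g (fst p)) \<partial>edge)"
    using integrable_edge_fst[OF g] g0 by (simp add: nn_integral_eq_integral)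
  also have "\<dots> \<le> (\<integral>\<^sup>+z. ennreal (g z) \<partial>\<mu>)"
    by (rule nn_integral_edge_fst_le) simp
  also have "\<dots> = ennreal (\<integral>z. g z \<partial>\<mu>)"
    using g g0 by (simp add: nn_integral_eq_integral)
  finally show ?thesis
    using g0 by (simp add: integral_nonneg_AE)
qed

lemma integral_edge_nonneg:
  fixes g :: "'b \<times> 'b \<Rightarrow> real"
  assumes g[measurable]: "g \<in> borel_measurable (\<mu> \<Otimes>\<^sub>M \<mu>)" and g0: "\<And>p. 0 \<le> g p"
    and gi: "integrable edge g"
  shows "integrable \<mu> (\<lambda>z. \<integral>z'. max 0 (\<alpha> z z') * g (z, z') \<partial>K z)"
    and "(\<integral>p. g p \<partial>edge) = (\<integral>z. (\<integral>z'. max 0 (\<alpha> z z') * g (z, z') \<partial>K z) \<partial>\<mu>)"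
    and "AE z in \<mu>. integrable (K z) (\<lambda>z'. max 0 (\<alpha> z z') * g (z, z'))"
proof -
  define F where "F z = (\<integral>\<^sup>+z'. ennreal (\<alpha> z z') * ennreal (g (z, z')) \<partial>K z)" for z
  define A where "A z = (\<integral>z'. max 0 (\<alpha> z z') * g (z, z') \<partial>K z)" for z
  have Fm[measurable]: "F \<in> borel_measurable \<mu>"
    unfolding F_def by (rule nn_integral_measurable_subprob_algebra2) measurable
  have Am[measurable]: "A \<in> borel_measurable \<mu>"
    unfolding A_def by (rule integral_kernel_measurable[OF kernel_subprob]) measurable
  have A0: "0 \<le> A z" for z
    unfolding A_def by (auto intro!: integral_nonneg_AE simp: g0)
  have inner_eq: "(\<integral>\<^sup>+z'. ennreal (max 0 (\<alpha> z z') * g (z, z')) \<partial>K z) = F z" for z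
    unfolding F_def by (rule nn_integral_cong) (simp add: g0 ennreal_mult'' ennreal_max_0)
  have inner_m: "(\<lambda>z'. max 0 (\<alpha> z z') * g (z, z')) \<in> borel_measurable (K z)" if "z \<in> space \<mu>" for z
    using that sets_kernel[OF that] by (simp cong: measurable_cong_sets)
  have "(\<integral>\<^sup>+p. ennreal (g p) \<partial>edge) = (\<integral>\<^sup>+z. F z \<partial>\<mu>)"
    unfolding F_def by (rule nn_integral_edge) measurable
  moreover have "(\<integral>\<^sup>+p. ennreal (g p) \<partial>edge) < \<infinity>"
    using gi g0 by (simp add: integrable_iff_bounded)
  ultimately have finF: "(\<integral>\<^sup>+z. F z \<partial>\<mu>) \<noteq> \<infinity>" and nnG: "(\<integral>\<^sup>+p. ennreal (g p) \<partial>edge) = (\<integral>\<^sup>+z. F z \<partial>\<mu>)"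
    by auto
  have aeF: "AE z in \<mu>. F z \<noteq> \<infinity>"
    by (rule nn_integral_PInf_AE[OF Fm finF])
  then show "AE z in \<mu>. integrable (K z) (\<lambda>z'. max 0 (\<alpha> z z') * g (z, z'))"
    by (rule AE_mp[OF _ AE_I2[OF impI]])
      (use inner_eq inner_m g0 in \<open>auto intro!: integrableI_nonneg simp: top.not_eq_extremum\<close>)
  have "A z = enn2real (F z)" if "z \<in> space \<mu>" for z
    unfolding A_def inner_eq[symmetric] by (rule integral_eq_nn_integral[OF inner_m[OF that]]) (simp add: g0)
  then have nnA: "(\<integral>\<^sup>+z. ennreal (A z) \<partial>\<mu>) = (\<integral>\<^sup>+z. F z \<partial>\<mu>)"
    using aeF by (intro nn_integral_cong_AE) (auto simp: ennreal_enn2real_if)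
  then show "integrable \<mu> (\<lambda>z. \<integral>z'. max 0 (\<alpha> z z') * g (z, z') \<partial>K z)"
    using A0 finF by (intro integrableI_nonneg) (auto simp: A_def[symmetric] top.not_eq_extremum)
  have "(\<integral>p. g p \<partial>edge) = enn2real (\<integral>\<^sup>+p. ennreal (g p) \<partial>edge)"
    by (rule integral_eq_nn_integral) (simp_all add: g0)
  also have "\<dots> = (\<integral>z. A z \<partial>\<mu>)"
    unfolding nnG nnA[symmetric] by (rule integral_eq_nn_integral[symmetric]) (simp_all add: A0)
  finally show "(\<integral>p. g p \<partial>edge) = (\<integral>z. (\<integral>z'. max 0 (\<alpha> z z') * g (z, z') \<partial>K z) \<partial>\<mu>)"
    by (simp add: A_def)
qed

lemma integral_edge:
  fixes g :: "'b \<times> 'b \<Rightarrow> real"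
  assumes g[measurable]: "g \<in> borel_measurable (\<mu> \<Otimes>\<^sub>M \<mu>)" and gi: "integrable edge g"
  shows "(\<integral>p. g p \<partial>edge) = (\<integral>z. (\<integral>z'. max 0 (\<alpha> z z') * g (z, z') \<partial>K z) \<partial>\<mu>)"
    and "AE z in \<mu>. integrable (K z) (\<lambda>z'. max 0 (\<alpha> z z') * g (z, z'))"
proof -
  let ?p = "\<lambda>p. max 0 (g p)" and ?n = "\<lambda>p. max 0 (- g p)"
  let ?I = "\<lambda>h z. \<integral>z'. max 0 (\<alpha> z z') * h (z, z') \<partial>K z"
  have split: "max 0 (\<alpha> z z') * g (z, z') = max 0 (\<alpha> z z') * ?p (z, z') - max 0 (\<alpha> z z') * ?n (z, z')"
    for z z' by (simp add: max_def algebra_simps)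
  note P = integral_edge_nonneg[of ?p] and N = integral_edge_nonneg[of ?n]
  have ip: "integrable edge ?p" and "integrable edge ?n"
    using gi by auto
  then have ae: "AE z in \<mu>. integrable (K z) (\<lambda>z'. max 0 (\<alpha> z z') * ?p (z, z'))
      \<and> integrable (K z) (\<lambda>z'. max 0 (\<alpha> z z') * ?n (z, z'))"
    using P(3) N(3) by simp
  then show "AE z in \<mu>. integrable (K z) (\<lambda>z'. max 0 (\<alpha> z z') * g (z, z'))"
    by eventually_elim (simp add: split)
  have "(\<integral>p. g p \<partial>edge) = (\<integral>p. ?p p - ?n p \<partial>edge)"
    by (intro Bochner_Integration.integral_cong) (auto simp: max_def)
  also have "\<dots> = (\<integral>z. ?I ?p z \<partial>\<mu>) - (\<integral>z. ?I ?n z \<partial>\<mu>)"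
    using \<open>integrable edge ?p\<close> \<open>integrable edge ?n\<close> P(2) N(2) by simp
  also have "\<dots> = (\<integral>z. ?I ?p z - ?I ?n z \<partial>\<mu>)"
    using \<open>integrable edge ?p\<close> \<open>integrable edge ?n\<close> P(1) N(1) by simp
  also have "\<dots> = (\<integral>z. ?I g z \<partial>\<mu>)"
  proof (rule integral_cong_AE)
    show "(\<lambda>z. ?I ?p z - ?I ?n z) \<in> borel_measurable \<mu>" "?I g \<in> borel_measurable \<mu>"
      by (intro borel_measurable_diff integral_kernel_measurable[OF kernel_subprob]; measurable)+
    show "AE z in \<mu>. ?I ?p z - ?I ?n z = ?I g z"
      using ae by eventually_elim (simp add: split)
  qed
  finally show "(\<integral>p. g p \<partial>edge) = (\<integral>z. ?I g z \<partial>\<mu>)" .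
qed

end

locale reversible_mh = metropolis_kernel \<mu> K \<alpha>
  for \<mu> :: "'b measure" and K \<alpha> +
  assumes reversible: "distr (edge_measure \<mu> K \<alpha>) (\<mu> \<Otimes>\<^sub>M \<mu>) (\<lambda>(z, z'). (z', z)) = edge_measure \<mu> K \<alpha>"
begin

lemma nn_integral_edge_swap:
  assumes [measurable]: "h \<in> borel_measurable (\<mu> \<Otimes>\<^sub>M \<mu>)"
  shows "(\<integral>\<^sup>+p. h (snd p, fst p) \<partial>edge) = (\<integral>\<^sup>+p. h p \<partial>edge)"
proof -
  have "(\<integral>\<^sup>+p. h p \<partial>edge) = (\<integral>\<^sup>+p. h p \<partial>distr edge (\<mu> \<Otimes>\<^sub>M \<mu>) (\<lambda>(z, z'). (z', z)))"
    by (simp add: reversible)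
  also have "\<dots> = (\<integral>\<^sup>+p. h (snd p, fst p) \<partial>edge)"
    by (subst nn_integral_distr) (simp_all add: case_prod_beta')
  finally show ?thesis ..
qed

lemma
  fixes g :: "'b \<times> 'b \<Rightarrow> real"
  assumes g[measurable]: "g \<in> borel_measurable (\<mu> \<Otimes>\<^sub>M \<mu>)"
  shows integral_edge_swap: "(\<integral>p. g (snd p, fst p) \<partial>edge) = (\<integral>p. g p \<partial>edge)"
    and integrable_edge_swap: "integrable edge g \<Longrightarrow> integrable edge (\<lambda>p. g (snd p, fst p))"
proof -
  have sw: "(\<lambda>(z, z'). (z', z)) \<in> edge \<rightarrow>\<^sub>M \<mu> \<Otimes>\<^sub>M \<mu>"
    by simp
  have "(\<integral>p. g p \<partial>edge) = (\<integral>p. g p \<partial>distr edge (\<mu> \<Otimes>\<^sub>M \<mu>) (\<lambda>(z, z'). (z', z)))"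
    by (simp add: reversible)
  also have "\<dots> = (\<integral>p. g (snd p, fst p) \<partial>edge)"
    by (subst integral_distr[OF sw g]) (simp add: case_prod_beta')
  finally show "(\<integral>p. g (snd p, fst p) \<partial>edge) = (\<integral>p. g p \<partial>edge)" ..
  assume "integrable edge g"
  then have "integrable (distr edge (\<mu> \<Otimes>\<^sub>M \<mu>) (\<lambda>(z, z'). (z', z))) g"
    by (simp add: reversible)
  then show "integrable edge (\<lambda>p. g (snd p, fst p))"
    using integrable_distr_eq[OF sw g] by (simp add: case_prod_beta')
qed

lemma integrable_edge_snd:
  fixes g :: "'b \<Rightarrow> real"
  assumes "integrable \<mu> g"
  shows "integrable edge (\<lambda>p. g (snd p))"
proof -
  have [measurable]: "g \<in> borel_measurable \<mu>"
    using assms by simp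
  show ?thesis
    using integrable_edge_swap[of "\<lambda>p. g (fst p)", OF _ integrable_edge_fst[OF assms]] by simp
qed

lemma AE_edge:
  assumes [measurable]: "Measurable.pred \<mu> P" and "AE z in \<mu>. P z"
  shows "AE p in edge. P (fst p) \<and> P (snd p)"
proof -
  let ?h = "\<lambda>z. indicator {z \<in> space \<mu>. \<not> P z} z :: ennreal"
  have "(\<integral>\<^sup>+z. ?h z \<partial>\<mu>) = 0"
    using assms(2) by (subst nn_integral_0_iff_AE) (auto elim: eventually_mono)
  then have fst0: "(\<integral>\<^sup>+p. ?h (fst p) \<partial>edge) = 0"
    using nn_integral_edge_fst_le[of ?h] by simp
  moreover have "(\<integral>\<^sup>+p. ?h (snd p) \<partial>edge) = 0"
    using nn_integral_edge_swap[of "\<lambda>p. ?h (fst p)"] fst0 by simp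
  ultimately have "AE p in edge. ?h (fst p) = 0" "AE p in edge. ?h (snd p) = 0"
    by (simp_all add: nn_integral_0_iff_AE)
  then show ?thesis
    by (rule AE_mp[OF _ AE_mp[OF _ AE_I2]]) (auto simp: space_pair_measure indicator_def split: if_splits)
qed

lemma dirichlet_edge:
  fixes f :: "'b \<Rightarrow> real"
  assumes f[measurable]: "f \<in> borel_measurable \<mu>" and fi: "integrable \<mu> f"
    and f2: "integrable \<mu> (\<lambda>z. (f z)\<^sup>2)"
  shows "integrable edge (\<lambda>p. (f (fst p) - f (snd p))\<^sup>2)"
    and "dirichlet \<mu> (mh_kernel \<mu> K \<alpha>) f = (\<integral>p. (f (fst p) - f (snd p))\<^sup>2 \<partial>edge) / 2"
proof -
  let ?g = "\<lambda>p. (f (fst p) - f (snd p)) * f (fst p)"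
  have iB: "integrable edge (\<lambda>p. 2 * ((f (fst p))\<^sup>2 + (f (snd p))\<^sup>2))"
    using integrable_edge_fst[OF f2] integrable_edge_snd[OF f2] by simp
  show "integrable edge (\<lambda>p. (f (fst p) - f (snd p))\<^sup>2)"
    by (rule Bochner_Integration.integrable_bound[OF iB]) (auto intro!: AE_I2 simp: square_diff_le)
  have gm: "?g \<in> borel_measurable (\<mu> \<Otimes>\<^sub>M \<mu>)"
    by measurable
  have ig: "integrable edge ?g"
    by (rule Bochner_Integration.integrable_bound[OF iB]) (auto intro!: AE_I2 simp: abs_diff_mult_le)
  have "AE z in \<mu>. (f z - (\<integral>z'. f z' \<partial>mh_kernel \<mu> K \<alpha> z)) * f z
      = (\<integral>z'. max 0 (\<alpha> z z') * ((f z - f z') * f z) \<partial>K z)"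
    using integral_edge(2)[of "\<lambda>p. f (snd p)", OF measurable_compose[OF measurable_snd f] integrable_edge_snd[OF fi]]
      accept_nonneg_AE
  proof (rule AE_mp[OF _ AE_mp, OF _ _ AE_I2[OF impI[OF impI]]])
    fix z assume z: "z \<in> space \<mu>" and "AE z' in K z. 0 \<le> \<alpha> z z'"
      and "integrable (K z) (\<lambda>z'. max 0 (\<alpha> z z') * f (snd (z, z')))"
    then have "f z - (\<integral>z'. f z' \<partial>mh_kernel \<mu> K \<alpha> z) = (\<integral>z'. max 0 (\<alpha> z z') * (f z - f z') \<partial>K z)"
      using prob_space_kernel sets_kernel accept_le_1 by (intro mh_kernel_residual) auto
    then show "(f z - (\<integral>z'. f z' \<partial>mh_kernel \<mu> K \<alpha> z)) * f z
        = (\<integral>z'. max 0 (\<alpha> z z') * ((f z - f z') * f z) \<partial>K z)"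
      by (simp add: mult.assoc flip: integral_mult_left_zero)
  qed
  then have "dirichlet \<mu> (mh_kernel \<mu> K \<alpha>) f = (\<integral>z. (\<integral>z'. max 0 (\<alpha> z z') * ?g (z, z') \<partial>K z) \<partial>\<mu>)"
    unfolding dirichlet_def
    using measurable_integral_mh_kernel[OF kernel_subprob measurable_accept f]
    by (intro integral_cong_AE) (simp_all add: integral_kernel_measurable[OF kernel_subprob])
  also have "\<dots> = (\<integral>p. ?g p \<partial>edge)"
    by (rule integral_edge(1)[symmetric]) (simp_all add: ig)
  also have "\<dots> = ((\<integral>p. ?g p \<partial>edge) + (\<integral>p. ?g (snd p, fst p) \<partial>edge)) / 2"
    using integral_edge_swap[OF gm] by simp
  also have "\<dots> = (\<integral>p. ?g p + ?g (snd p, fst p) \<partial>edge) / 2"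
    using ig integrable_edge_swap[OF gm ig] by simp
  also have "\<dots> = (\<integral>p. (f (fst p) - f (snd p))\<^sup>2 \<partial>edge) / 2"
    by (simp add: power2_eq_square algebra_simps)
  finally show "dirichlet \<mu> (mh_kernel \<mu> K \<alpha>) f = (\<integral>p. (f (fst p) - f (snd p))\<^sup>2 \<partial>edge) / 2" .
qed

end

section \<open>The pseudo-marginal and embedded marginal kernels\<close>

locale pseudo_marginal =
  fixes \<pi> :: "'a measure" and q :: "'a \<Rightarrow> 'a measure" and Q :: "'a \<Rightarrow> real measure"
  assumes prob_space_\<pi>: "prob_space \<pi>"
    and proposal_kernel: "q \<in> \<pi> \<rightarrow>\<^sub>M prob_algebra \<pi>"
    and weight_kernel: "Q \<in> \<pi> \<rightarrow>\<^sub>M prob_algebra borel"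
    and weight_nonneg: "\<And>x. x \<in> space \<pi> \<Longrightarrow> AE w in Q x. 0 \<le> w"
    and weight_integrable: "\<And>x. x \<in> space \<pi> \<Longrightarrow> integrable (Q x) (\<lambda>w. w)"
    and weight_mean: "\<And>x. x \<in> space \<pi> \<Longrightarrow> (\<integral> w. w \<partial>Q x) = 1"
    and ratio_ac: "absolutely_continuous (prop_joint \<pi> q) (rev_joint \<pi> q)"
begin

abbreviation "E \<equiv> \<pi> \<Otimes>\<^sub>M borel"
abbreviation "pit \<equiv> pitilde \<pi> Q"

lemma weight_distribution: "x \<in> space \<pi> \<Longrightarrow> prob_space (Q x) \<and> sets (Q x) = sets borel"
  using measurable_space[OF weight_kernel] by (auto simp: space_prob_algebra)

lemma proposal_distribution: "x \<in> space \<pi> \<Longrightarrow> prob_space (q x) \<and> sets (q x) = sets \<pi>"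
  using measurable_space[OF proposal_kernel] by (auto simp: space_prob_algebra)

lemma space_weight[simp]: "x \<in> space \<pi> \<Longrightarrow> space (Q x) = UNIV"
proof -
  assume "x \<in> space \<pi>"
  then have "sets (Q x) = sets borel" using weight_distribution by blast
  then have "space (Q x) = space (borel::real measure)" by (rule sets_eq_imp_space_eq)
  then show ?thesis by simp
qed

lemma space_proposal[simp]: "x \<in> space \<pi> \<Longrightarrow> space (q x) = space \<pi>"
proof -
  assume "x \<in> space \<pi>"
  then have "sets (q x) = sets \<pi>" using proposal_distribution by blast
  then show ?thesis by (rule sets_eq_imp_space_eq)
qed

lemma weight_subprob[measurable]: "Q \<in> \<pi> \<rightarrow>\<^sub>M subprob_algebra borel"
  using weight_kernel by (rule measurable_prob_algebraD)

lemma proposal_subprob[measurable]: "q \<in> \<pi> \<rightarrow>\<^sub>M subprob_algebra \<pi>"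
  using proposal_kernel by (rule measurable_prob_algebraD)

lemma emeasure_pitilde_x: "x \<in> space \<pi> \<Longrightarrow> A \<in> sets borel \<Longrightarrow>
   emeasure (pitilde_x Q x) A = (\<integral>\<^sup>+w. ennreal w * indicator A w \<partial>Q x)"
  unfolding pitilde_x_def using weight_distribution by (subst emeasure_density) (auto cong: measurable_cong_sets)

lemma nn_integral_pitilde_x: "x \<in> space \<pi> \<Longrightarrow> g \<in> borel_measurable borel \<Longrightarrow>
   (\<integral>\<^sup>+w. g w \<partial>pitilde_x Q x) = (\<integral>\<^sup>+w. ennreal w * g w \<partial>Q x)"
  unfolding pitilde_x_def using weight_distribution by (subst nn_integral_density) (auto cong: measurable_cong_sets)

lemma pitilde_x_distribution: "x \<in> space \<pi> \<Longrightarrow> prob_space (pitilde_x Q x) \<and> sets (pitilde_x Q x) = sets borel"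
proof -
  assume x: "x \<in> space \<pi>"
  have "(\<integral>\<^sup>+w. ennreal w \<partial>Q x) = ennreal (\<integral> w. w \<partial>Q x)"
    using weight_nonneg[OF x] weight_integrable[OF x] weight_distribution[OF x] by (subst nn_integral_eq_integral) auto
  then have "emeasure (pitilde_x Q x) UNIV = 1"
    using emeasure_pitilde_x[OF x, of UNIV] weight_mean[OF x] by simp
  moreover have "sets (pitilde_x Q x) = sets borel"
    unfolding pitilde_x_def using weight_distribution[OF x] by simp
  ultimately show ?thesis
    by (metis prob_spaceI sets_eq_imp_space_eq space_borel)
qed

lemma pitilde_x_kernel: "pitilde_x Q \<in> \<pi> \<rightarrow>\<^sub>M prob_algebra borel"
proof (rule measurable_prob_algebraI)
  show "x \<in> space \<pi> \<Longrightarrow> prob_space (pitilde_x Q x)" for x using pitilde_x_distribution by blast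
  show "pitilde_x Q \<in> \<pi> \<rightarrow>\<^sub>M subprob_algebra borel"
  proof (rule measurable_subprob_algebra)
    show "a \<in> space \<pi> \<Longrightarrow> subprob_space (pitilde_x Q a)" for a
      using pitilde_x_distribution prob_space_imp_subprob_space by blast
    show "a \<in> space \<pi> \<Longrightarrow> sets (pitilde_x Q a) = sets borel" for a using pitilde_x_distribution by blast
    fix A :: "real set" assume A: "A \<in> sets borel"
    have "(\<lambda>x. \<integral>\<^sup>+w. ennreal w * indicator A w \<partial>Q x) \<in> borel_measurable \<pi>"
      by (rule nn_integral_measurable_subprob_algebra2[where N=borel]) (use A in measurable)
    then show "(\<lambda>a. emeasure (pitilde_x Q a) A) \<in> borel_measurable \<pi>"
      by (rule measurable_cong[THEN iffD1, rotated]) (simp add: emeasure_pitilde_x A)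
  qed
qed

lemma pitilde_x_subprob[measurable]: "pitilde_x Q \<in> \<pi> \<rightarrow>\<^sub>M subprob_algebra borel"
  using pitilde_x_kernel by (rule measurable_prob_algebraD)

lemma pitilde_pair_kernel: "(\<lambda>x. distr (pitilde_x Q x) E (Pair x)) \<in> \<pi> \<rightarrow>\<^sub>M prob_algebra E"
  by (rule measurable_distr_prob_space2[OF pitilde_x_kernel]) simp

lemma prob_space_pit: "prob_space pit" and sets_pit[simp, measurable_cong]: "sets pit = sets E"
proof -
  have "\<pi> \<in> space (prob_algebra \<pi>)" using prob_space_\<pi> by (simp add: space_prob_algebra)
  then show "prob_space pit" "sets pit = sets E"
    unfolding pitilde_def using prob_space_bind' sets_bind' pitilde_pair_kernel by blast+
qed

lemma space_pit[simp]: "space pit = space E"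
  using sets_pit sets_eq_imp_space_eq by blast

lemma prob_algebra_pit: "prob_algebra pit = prob_algebra E"
  by (simp add: prob_algebra_def cong: subprob_algebra_cong)

lemma sets_pit_pair: "sets (pit \<Otimes>\<^sub>M pit) = sets (E \<Otimes>\<^sub>M E)"
  by (intro sets_pair_measure_cong) simp_all

lemma space_pit_pair[simp]: "space (pit \<Otimes>\<^sub>M pit) = space (E \<Otimes>\<^sub>M E)"
  using sets_eq_imp_space_eq[OF sets_pit_pair] .

lemma nn_integral_pit: assumes g[measurable]: "g \<in> borel_measurable E"
  shows "(\<integral>\<^sup>+z. g z \<partial>pit) = (\<integral>\<^sup>+x. \<integral>\<^sup>+w. ennreal w * g (x, w) \<partial>Q x \<partial>\<pi>)"
proof -
  have "(\<integral>\<^sup>+z. g z \<partial>pit) = (\<integral>\<^sup>+x. \<integral>\<^sup>+z. g z \<partial>distr (pitilde_x Q x) E (Pair x) \<partial>\<pi>)"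
    unfolding pitilde_def
    by (rule nn_integral_bind[OF g measurable_prob_algebraD[OF pitilde_pair_kernel]])
  also have "\<dots> = (\<integral>\<^sup>+x. \<integral>\<^sup>+w. ennreal w * g (x, w) \<partial>Q x \<partial>\<pi>)"
  proof (rule nn_integral_cong)
    fix x assume x: "x \<in> space \<pi>"
    have "(\<integral>\<^sup>+z. g z \<partial>distr (pitilde_x Q x) E (Pair x)) = (\<integral>\<^sup>+w. g (x,w) \<partial>pitilde_x Q x)"
      using pitilde_x_distribution[OF x] x
      by (subst nn_integral_distr) (auto cong: measurable_cong_sets)
    also have "\<dots> = (\<integral>\<^sup>+w. ennreal w * g (x, w) \<partial>Q x)"
      using x by (subst nn_integral_pitilde_x) auto
    finally show "(\<integral>\<^sup>+z. g z \<partial>distr (pitilde_x Q x) E (Pair x)) = (\<integral>\<^sup>+w. ennreal w * g (x, w) \<partial>Q x)" .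
  qed
  finally show ?thesis .
qed

definition lifted_proposal :: "('a \<Rightarrow> real measure) \<Rightarrow> 'a \<times> real \<Rightarrow> ('a \<times> real) measure" where
  "lifted_proposal R = (\<lambda>(x, w). q x \<bind> (\<lambda>y. distr (R y) E (Pair y)))"

abbreviation "pm_proposal \<equiv> lifted_proposal Q"
abbreviation "em_proposal \<equiv> lifted_proposal (pitilde_x Q)"

definition "r x y = mh_ratio \<pi> q x y"
definition "pm_accept = (\<lambda>(x::'a, w::real) (y::'a, u::real). min 1 (r x y * (u / w)))"
definition "em_accept = (\<lambda>(x::'a, w::real) (y::'a, u::real). mh_accept \<pi> q x y)"

lemma Ptilde_eq: "Ptilde \<pi> q Q = mh_kernel E pm_proposal pm_accept"
  unfolding Ptilde_def lifted_proposal_def pm_accept_def r_def ..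

lemma Pbar_eq: "Pbar \<pi> q Q = mh_kernel E em_proposal em_accept"
  unfolding Pbar_def lifted_proposal_def em_accept_def ..

lemma lifted_proposal_kernel:
  assumes R: "R \<in> \<pi> \<rightarrow>\<^sub>M prob_algebra borel"
  shows "lifted_proposal R \<in> E \<rightarrow>\<^sub>M prob_algebra E"
proof -
  have "(\<lambda>y. distr (R y) E (Pair y)) \<in> \<pi> \<rightarrow>\<^sub>M prob_algebra E"
    by (rule measurable_distr_prob_space2[OF R]) simp
  then have "(\<lambda>x. q x \<bind> (\<lambda>y. distr (R y) E (Pair y))) \<in> \<pi> \<rightarrow>\<^sub>M prob_algebra E"
    by (rule measurable_bind_prob_space[OF proposal_kernel])
  then have "(\<lambda>z. q (fst z) \<bind> (\<lambda>y. distr (R y) E (Pair y))) \<in> E \<rightarrow>\<^sub>M prob_algebra E"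
    by (rule measurable_compose[OF measurable_fst])
  then show ?thesis
    unfolding lifted_proposal_def by (simp add: case_prod_beta')
qed

lemma nn_integral_lifted_proposal:
  assumes R: "R \<in> \<pi> \<rightarrow>\<^sub>M prob_algebra borel" and x: "x \<in> space \<pi>"
    and g[measurable]: "g \<in> borel_measurable E"
  shows "(\<integral>\<^sup>+z'. g z' \<partial>lifted_proposal R (x, w)) = (\<integral>\<^sup>+y. \<integral>\<^sup>+u. g (y, u) \<partial>R y \<partial>q x)"
proof -
  have "(\<lambda>y. distr (R y) E (Pair y)) \<in> \<pi> \<rightarrow>\<^sub>M subprob_algebra E"
    by (rule measurable_prob_algebraD, rule measurable_distr_prob_space2[OF R]) simp
  then have "(\<lambda>y. distr (R y) E (Pair y)) \<in> q x \<rightarrow>\<^sub>M subprob_algebra E"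
    using proposal_distribution[OF x] by (simp cong: measurable_cong_sets)
  then have "(\<integral>\<^sup>+z'. g z' \<partial>lifted_proposal R (x, w)) = (\<integral>\<^sup>+y. \<integral>\<^sup>+z'. g z' \<partial>distr (R y) E (Pair y) \<partial>q x)"
    unfolding lifted_proposal_def by (simp add: nn_integral_bind[OF g])
  also have "\<dots> = (\<integral>\<^sup>+y. \<integral>\<^sup>+u. g (y, u) \<partial>R y \<partial>q x)"
  proof (rule nn_integral_cong)
    fix y assume "y \<in> space (q x)"
    then have "sets (R y) = sets borel"
      using x measurable_space[OF R] by (auto simp: space_prob_algebra)
    then show "(\<integral>\<^sup>+z'. g z' \<partial>distr (R y) E (Pair y)) = (\<integral>\<^sup>+u. g (y, u) \<partial>R y)"
      using \<open>y \<in> space (q x)\<close> x by (subst nn_integral_distr) (auto cong: measurable_cong_sets)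
  qed
  finally show ?thesis .
qed

abbreviation "mu \<equiv> prop_joint \<pi> q"
abbreviation "nu \<equiv> rev_joint \<pi> q"

lemma joint_pair_kernel: "(\<lambda>x. distr (q x) (\<pi> \<Otimes>\<^sub>M \<pi>) (Pair x)) \<in> \<pi> \<rightarrow>\<^sub>M prob_algebra (\<pi> \<Otimes>\<^sub>M \<pi>)"
  by (rule measurable_distr_prob_space2[OF proposal_kernel]) simp

lemma prob_space_mu: "prob_space mu" and sets_mu[simp, measurable_cong]: "sets mu = sets (\<pi> \<Otimes>\<^sub>M \<pi>)"
proof -
  have "\<pi> \<in> space (prob_algebra \<pi>)" using prob_space_\<pi> by (simp add: space_prob_algebra)
  then show "prob_space mu" "sets mu = sets (\<pi> \<Otimes>\<^sub>M \<pi>)"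
    unfolding prop_joint_def using prob_space_bind' sets_bind' joint_pair_kernel by blast+
qed

lemma space_mu[simp]: "space mu = space (\<pi> \<Otimes>\<^sub>M \<pi>)"
  using sets_mu sets_eq_imp_space_eq by blast

lemma nn_integral_mu: assumes g[measurable]: "g \<in> borel_measurable (\<pi> \<Otimes>\<^sub>M \<pi>)"
  shows "(\<integral>\<^sup>+z. g z \<partial>mu) = (\<integral>\<^sup>+x. \<integral>\<^sup>+y. g (x, y) \<partial>q x \<partial>\<pi>)"
proof -
  have "(\<integral>\<^sup>+z. g z \<partial>mu) = (\<integral>\<^sup>+x. \<integral>\<^sup>+z. g z \<partial>distr (q x) (\<pi> \<Otimes>\<^sub>M \<pi>) (Pair x) \<partial>\<pi>)"
    unfolding prop_joint_def
    by (rule nn_integral_bind[OF g measurable_prob_algebraD[OF joint_pair_kernel]])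
  also have "\<dots> = (\<integral>\<^sup>+x. \<integral>\<^sup>+y. g (x, y) \<partial>q x \<partial>\<pi>)"
  proof (rule nn_integral_cong)
    fix x assume x: "x \<in> space \<pi>"
    show "(\<integral>\<^sup>+z. g z \<partial>distr (q x) (\<pi> \<Otimes>\<^sub>M \<pi>) (Pair x)) = (\<integral>\<^sup>+y. g (x, y) \<partial>q x)"
      using proposal_distribution[OF x] x by (subst nn_integral_distr) (auto cong: measurable_cong_sets)
  qed
  finally show ?thesis .
qed

lemma measurable_ratio[measurable]: "(\<lambda>(x, y). r x y) \<in> borel_measurable (\<pi> \<Otimes>\<^sub>M \<pi>)"
proof -
  have "RN_deriv mu nu \<in> borel_measurable (\<pi> \<Otimes>\<^sub>M \<pi>)"
    using borel_measurable_RN_deriv[of mu nu] by (simp cong: measurable_cong_sets)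
  then have "(\<lambda>p. enn2real (RN_deriv mu nu p)) \<in> borel_measurable (\<pi> \<Otimes>\<^sub>M \<pi>)" by measurable
  then show ?thesis unfolding r_def mh_ratio_def by (simp add: case_prod_beta')
qed

lemma ratio_nonneg: "0 \<le> r x y" unfolding r_def mh_ratio_def by simp

lemma measurable_pm_accept[measurable]: "(\<lambda>(z, z'). pm_accept z z') \<in> borel_measurable (E \<Otimes>\<^sub>M E)"
proof -
  have "(\<lambda>p. min 1 (r (fst (fst p)) (fst (snd p)) * (snd (snd p) / snd (fst p)))) \<in> borel_measurable (E \<Otimes>\<^sub>M E)"
  proof -
    have "(\<lambda>p. r (fst (fst p)) (fst (snd p))) \<in> borel_measurable (E \<Otimes>\<^sub>M E)"
      using measurable_compose[OF _ measurable_ratio, of "\<lambda>p. (fst (fst p), fst (snd p))"] by (simp add: case_prod_beta')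
    then show ?thesis by measurable
  qed
  then show ?thesis unfolding pm_accept_def by (simp add: case_prod_beta')
qed

lemma measurable_em_accept[measurable]: "(\<lambda>(z, z'). em_accept z z') \<in> borel_measurable (E \<Otimes>\<^sub>M E)"
proof -
  have "(\<lambda>p. r (fst (fst p)) (fst (snd p))) \<in> borel_measurable (E \<Otimes>\<^sub>M E)"
    using measurable_compose[OF _ measurable_ratio, of "\<lambda>p. (fst (fst p), fst (snd p))"] by (simp add: case_prod_beta')
  then have "(\<lambda>p. min 1 (r (fst (fst p)) (fst (snd p)))) \<in> borel_measurable (E \<Otimes>\<^sub>M E)" by measurable
  then show ?thesis unfolding em_accept_def mh_accept_def r_def by (simp add: case_prod_beta')
qed

abbreviation "PP \<equiv> \<pi> \<Otimes>\<^sub>M \<pi>"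
definition "rev_pair = (\<lambda>(x::'a, y::'a). (y, x))"

lemma measurable_rev_pair[measurable]: "rev_pair \<in> PP \<rightarrow>\<^sub>M PP"
  unfolding rev_pair_def by measurable

lemma rev_pair_rev_pair[simp]: "rev_pair (rev_pair z) = z" by (simp add: rev_pair_def split: prod.splits)

lemma nu_eq_distr: "nu = distr mu PP rev_pair"
  unfolding rev_joint_def rev_pair_def ..

lemma sets_nu[simp, measurable_cong]: "sets nu = sets PP" by (simp add: nu_eq_distr)
lemma space_nu[simp]: "space nu = space PP" by (simp add: nu_eq_distr)

lemma rev_pair_space: "z \<in> space PP \<Longrightarrow> rev_pair z \<in> space PP"
  using measurable_space[OF measurable_rev_pair] by blast

lemma distr_nu_rev_pair: "distr nu PP rev_pair = mu"
proof -
  have "distr nu PP rev_pair = distr mu PP (rev_pair \<circ> rev_pair)"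
    unfolding nu_eq_distr by (rule distr_distr) (auto cong: measurable_cong_sets)
  also have "\<dots> = distr mu PP (\<lambda>x. x)"
    by (rule distr_cong) auto
  also have "\<dots> = mu" by (rule distr_id2) simp
  finally show ?thesis .
qed

lemma nu_ac_mu: "absolutely_continuous nu mu"
  unfolding absolutely_continuous_def
proof
  fix A assume A: "A \<in> null_sets nu"
  then have As: "A \<in> sets PP" and nA: "emeasure nu A = 0" by auto
  let ?B = "rev_pair -` A \<inter> space PP"
  have Bs: "?B \<in> sets PP" using As by measurable
  have "emeasure mu ?B = 0" using nA As unfolding nu_eq_distr by (simp add: emeasure_distr)
  then have "?B \<in> null_sets mu" using Bs by auto
  then have "?B \<in> null_sets nu" using ratio_ac unfolding absolutely_continuous_def by blast
  then have "emeasure nu ?B = 0" by auto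
  then have "emeasure mu (rev_pair -` ?B \<inter> space PP) = 0" using Bs unfolding nu_eq_distr by (simp add: emeasure_distr)
  moreover have "rev_pair -` ?B \<inter> space PP = A"
    using sets.sets_into_space[OF As] rev_pair_space by (auto simp: rev_pair_def space_pair_measure)
  ultimately show "A \<in> null_sets mu" using As by auto
qed

definition "dnu = RN_deriv mu nu"
definition "dmu = RN_deriv nu mu"

lemma measurable_dnu[measurable]: "dnu \<in> borel_measurable PP"
  unfolding dnu_def using borel_measurable_RN_deriv[of mu nu] by (simp cong: measurable_cong_sets)
lemma measurable_dmu[measurable]: "dmu \<in> borel_measurable PP"
  unfolding dmu_def using borel_measurable_RN_deriv[of nu mu] by (simp cong: measurable_cong_sets)

lemma prob_space_nu: "prob_space nu"
  unfolding nu_eq_distr by (rule prob_space.prob_space_distr[OF prob_space_mu]) (simp cong: measurable_cong_sets)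

lemma density_dnu: "density mu dnu = nu"
proof -
  interpret prob_space mu by (rule prob_space_mu)
  show ?thesis unfolding dnu_def by (rule density_RN_deriv[OF ratio_ac]) simp
qed

lemma density_dmu: "density nu dmu = mu"
proof -
  interpret prob_space nu by (rule prob_space_nu)
  show ?thesis unfolding dmu_def by (rule density_RN_deriv[OF nu_ac_mu]) simp
qed

lemma dnu_mult_dmu: "AE z in mu. dnu z * dmu z = 1"
proof -
  interpret prob_space mu by (rule prob_space_mu)
  have m1: "dnu \<in> borel_measurable mu" "dmu \<in> borel_measurable mu" by (simp_all cong: measurable_cong_sets)
  have "density mu (\<lambda>z. dnu z * dmu z) = density (density mu dnu) dmu"
    by (rule density_density_eq[symmetric]) (use m1 in auto)
  also have "\<dots> = mu" using density_dnu density_dmu by simp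
  also have "\<dots> = density mu (\<lambda>_. 1)" by (simp add: density_1)
  finally show ?thesis
    using density_unique_iff[of "\<lambda>z. dnu z * dmu z" "\<lambda>_. 1"] m1 by simp
qed

lemma dmu_rev_pair: "AE z in mu. dmu (rev_pair z) = dnu z"
proof -
  interpret prob_space mu by (rule prob_space_mu)
  have "AE x in mu. RN_deriv (distr mu PP rev_pair) (distr nu PP rev_pair) (rev_pair x) = RN_deriv mu nu x"
  proof (rule RN_deriv_distr)
    show "rev_pair \<in> mu \<rightarrow>\<^sub>M PP" "rev_pair \<in> PP \<rightarrow>\<^sub>M mu" by (simp_all cong: measurable_cong_sets)
    show "\<forall>x\<in>space mu. rev_pair (rev_pair x) = x" by simp
    show "absolutely_continuous (distr mu PP rev_pair) (distr nu PP rev_pair)"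
      using nu_ac_mu by (simp add: distr_nu_rev_pair flip: nu_eq_distr)
    show "sets nu = sets mu" by simp
  qed
  then show ?thesis by (simp add: distr_nu_rev_pair dnu_def dmu_def flip: nu_eq_distr)
qed

lemma dnu_mult_dmu_rev_pair: "AE z in mu. dnu (rev_pair z) * dmu (rev_pair z) = 1"
proof -
  have "AE z in nu. dnu z * dmu z = 1"
    by (rule absolutely_continuous_AE[OF _ ratio_ac dnu_mult_dmu]) simp
  then show ?thesis unfolding nu_eq_distr
    by (subst (asm) AE_distr_iff) (auto cong: measurable_cong_sets)
qed

lemma dnu_mult_dnu_rev_pair: "AE z in mu. dnu z * dnu (rev_pair z) = 1"
  using dnu_mult_dmu_rev_pair dmu_rev_pair by eventually_elim (simp add: mult.commute)

lemma ratio_eq_dnu: "r x y = enn2real (dnu (x, y))"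
  unfolding r_def mh_ratio_def dnu_def ..

lemma ratio_inverse_AE: "AE z in mu. 0 < r (fst z) (snd z) \<and> r (snd z) (fst z) = 1 / r (fst z) (snd z)
    \<and> dnu z = ennreal (r (fst z) (snd z))"
  using dnu_mult_dnu_rev_pair
proof eventually_elim
  case (elim z)
  obtain x y where z: "z = (x, y)" by (cases z)
  have s: "rev_pair z = (y, x)" by (simp add: z rev_pair_def)
  have f1: "dnu z \<noteq> \<infinity>" "dnu (rev_pair z) \<noteq> \<infinity>" "dnu z \<noteq> 0" "dnu (rev_pair z) \<noteq> 0"
    using elim by (auto simp: ennreal_mult_eq_top_iff ennreal_top_mult mult_eq_0_iff)
       (metis ennreal_mult_top ennreal_top_neq_one ennreal_top_mult mult.commute zero_neq_one)+
  obtain a where a: "dnu z = ennreal a" "0 \<le> a" using f1(1) by (cases "dnu z") auto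
  obtain b where b: "dnu (rev_pair z) = ennreal b" "0 \<le> b" using f1(2) by (cases "dnu (rev_pair z)") auto
  have ab: "a * b = 1" using elim a b by (simp flip: ennreal_mult)
  have "0 < a" using a f1(3) by (auto simp: less_le)
  then show ?case using a b ab z s
    by (auto simp: ratio_eq_dnu field_simps)
qed



lemma weight_snd_kernel: "(\<lambda>p. Q (snd p)) \<in> (N \<Otimes>\<^sub>M \<pi>) \<rightarrow>\<^sub>M subprob_algebra borel"
  by (rule measurable_compose[OF measurable_snd weight_subprob])

lemma weight_fst_kernel: "(\<lambda>p. Q (fst p)) \<in> (\<pi> \<Otimes>\<^sub>M N) \<rightarrow>\<^sub>M subprob_algebra borel"
  by (rule measurable_compose[OF measurable_fst weight_subprob])

lemma measurable_weighted_inner: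
  assumes phi: "(\<lambda>((z, w), u). \<phi> z w u) \<in> borel_measurable ((PP \<Otimes>\<^sub>M borel) \<Otimes>\<^sub>M borel)"
  shows "(\<lambda>z. \<integral>\<^sup>+w. \<integral>\<^sup>+u. \<phi> z w u \<partial>Q (snd z) \<partial>Q (fst z)) \<in> borel_measurable PP"
proof -
  have k1: "(\<lambda>p. Q (snd (fst p))) \<in> (PP \<Otimes>\<^sub>M borel) \<rightarrow>\<^sub>M subprob_algebra borel"
    by (rule measurable_compose[OF measurable_fst weight_snd_kernel])
  have "(\<lambda>p. \<integral>\<^sup>+u. (\<lambda>p u. \<phi> (fst p) (snd p) u) p u \<partial>Q (snd (fst p))) \<in> borel_measurable (PP \<Otimes>\<^sub>M borel)"
    by (rule nn_integral_measurable_subprob_algebra2[OF _ k1]) (use phi in \<open>simp add: case_prod_beta'\<close>)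
  then have i: "(\<lambda>(z, w). \<integral>\<^sup>+u. \<phi> z w u \<partial>Q (snd z)) \<in> borel_measurable (PP \<Otimes>\<^sub>M borel)"
    by (simp add: case_prod_beta')
  show ?thesis
    by (rule nn_integral_measurable_subprob_algebra2[OF i weight_fst_kernel])
qed

lemma measurable_weight_integral_at:
  assumes x: "x \<in> space \<pi>"
    and phi: "(\<lambda>((w, y), u). \<phi> w y u) \<in> borel_measurable ((borel \<Otimes>\<^sub>M \<pi>) \<Otimes>\<^sub>M borel)"
  shows "(\<lambda>(w, y). \<integral>\<^sup>+u. \<phi> w y u \<partial>Q y) \<in> borel_measurable (Q x \<Otimes>\<^sub>M q x)"
proof -
  have "(\<lambda>p. \<integral>\<^sup>+u. (\<lambda>p u. \<phi> (fst p) (snd p) u) p u \<partial>Q (snd p)) \<in> borel_measurable (borel \<Otimes>\<^sub>M \<pi>)"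
    by (rule nn_integral_measurable_subprob_algebra2[OF _ weight_snd_kernel]) (use phi in \<open>simp add: case_prod_beta'\<close>)
  moreover have "sets (Q x \<Otimes>\<^sub>M q x) = sets (borel \<Otimes>\<^sub>M \<pi>)"
    using weight_distribution[OF x] proposal_distribution[OF x] by (intro sets_pair_measure_cong) auto
  ultimately show ?thesis by (simp add: case_prod_beta' cong: measurable_cong_sets)
qed

text \<open>Both edge measures have this form: the pseudo-marginal one with weight
  \<open>w min 1 (r u / w)\<close>, the embedded marginal one with weight \<open>w u min 1 r\<close>, where the
  factor \<open>u\<close> comes from drawing the proposed weight from \<open>\<pi>\<^sub>y(du) = u Q\<^sub>y(du)\<close>.\<close>
definition "weighted_integral W h = (\<integral>\<^sup>+x. \<integral>\<^sup>+w. \<integral>\<^sup>+y. \<integral>\<^sup>+u. W w u (r x y) * h ((x, w), (y, u)) \<partial>Q y \<partial>q x \<partial>Q x \<partial>\<pi>)"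
definition "weighted_inner W h z = (\<integral>\<^sup>+w. \<integral>\<^sup>+u. W w u (r (fst z) (snd z)) * h ((fst z, w), (snd z, u)) \<partial>Q (snd z) \<partial>Q (fst z))"

lemma measurable_ratio_comp[measurable]:
  assumes "a \<in> M \<rightarrow>\<^sub>M \<pi>" "b \<in> M \<rightarrow>\<^sub>M \<pi>"
  shows "(\<lambda>t. r (a t) (b t)) \<in> borel_measurable M"
  using measurable_compose[OF measurable_Pair[OF assms] measurable_ratio] by simp

lemma measurable_weight_comp:
  assumes Wm: "(\<lambda>p. W (fst p) (fst (snd p)) (snd (snd p))) \<in> borel_measurable (borel \<Otimes>\<^sub>M (borel \<Otimes>\<^sub>M borel))"
    and "a \<in> borel_measurable M" "b \<in> borel_measurable M" "c \<in> borel_measurable M"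
  shows "(\<lambda>t. W (a t) (b t) (c t)) \<in> borel_measurable M"
  using measurable_compose[OF measurable_Pair[OF assms(2) measurable_Pair[OF assms(3,4)]] Wm] by simp

lemma weighted_integral_mu:
  assumes Wm: "(\<lambda>p. W (fst p) (fst (snd p)) (snd (snd p))) \<in> borel_measurable (borel \<Otimes>\<^sub>M (borel \<Otimes>\<^sub>M borel))"
    and h[measurable]: "h \<in> borel_measurable (E \<Otimes>\<^sub>M E)"
  shows "weighted_integral W h = (\<integral>\<^sup>+z. weighted_inner W h z \<partial>mu)"
proof -
  have "weighted_integral W h = (\<integral>\<^sup>+x. \<integral>\<^sup>+y. \<integral>\<^sup>+w. \<integral>\<^sup>+u. W w u (r x y) * h ((x, w), (y, u)) \<partial>Q y \<partial>Q x \<partial>q x \<partial>\<pi>)"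
    unfolding weighted_integral_def
  proof (rule nn_integral_cong)
    fix x assume x: "x \<in> space \<pi>"
    have m: "(\<lambda>(w, y). \<integral>\<^sup>+u. W w u (r x y) * h ((x, w), (y, u)) \<partial>Q y) \<in> borel_measurable (Q x \<Otimes>\<^sub>M q x)"
    proof (rule measurable_weight_integral_at[OF x])
      have "(\<lambda>p. W (fst (fst p)) (snd p) (r x (snd (fst p))) * h ((x, fst (fst p)), (snd (fst p), snd p)))
          \<in> borel_measurable ((borel \<Otimes>\<^sub>M \<pi>) \<Otimes>\<^sub>M borel)"
        using x by (intro borel_measurable_times_ennreal measurable_weight_comp[OF Wm]) measurable
      then show "(\<lambda>((w, y), u). W w u (r x y) * h ((x, w), (y, u))) \<in> borel_measurable ((borel \<Otimes>\<^sub>M \<pi>) \<Otimes>\<^sub>M borel)"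
        by (simp add: case_prod_beta')
    qed
    show "(\<integral>\<^sup>+w. \<integral>\<^sup>+y. \<integral>\<^sup>+u. W w u (r x y) * h ((x, w), (y, u)) \<partial>Q y \<partial>q x \<partial>Q x) =
          (\<integral>\<^sup>+y. \<integral>\<^sup>+w. \<integral>\<^sup>+u. W w u (r x y) * h ((x, w), (y, u)) \<partial>Q y \<partial>Q x \<partial>q x)"
      using nn_integral_swap_sigma_finite[OF _ _ m] weight_distribution[OF x] proposal_distribution[OF x]
      by (simp add: prob_space_imp_sigma_finite)
  qed
  also have "\<dots> = (\<integral>\<^sup>+z. weighted_inner W h z \<partial>mu)"
  proof -
    have mG: "weighted_inner W h \<in> borel_measurable PP"
      unfolding weighted_inner_def
    proof (rule measurable_weighted_inner)
      have "(\<lambda>p. W (snd (fst p)) (snd p) (r (fst (fst (fst p))) (snd (fst (fst p)))) *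
              h ((fst (fst (fst p)), snd (fst p)), (snd (fst (fst p)), snd p))) \<in> borel_measurable ((PP \<Otimes>\<^sub>M borel) \<Otimes>\<^sub>M borel)"
        by (intro borel_measurable_times_ennreal measurable_weight_comp[OF Wm]) measurable
      then show "(\<lambda>((z, w), u). W w u (r (fst z) (snd z)) * h ((fst z, w), (snd z, u))) \<in> borel_measurable ((PP \<Otimes>\<^sub>M borel) \<Otimes>\<^sub>M borel)"
        by (simp add: case_prod_beta')
    qed
    show ?thesis using nn_integral_mu[OF mG] by (simp add: weighted_inner_def)
  qed
  finally show ?thesis .
qed


lemma nn_integral_mu_dnu:
  assumes F[measurable]: "F \<in> borel_measurable PP"
  shows "(\<integral>\<^sup>+z. F z \<partial>mu) = (\<integral>\<^sup>+z. dnu z * F (rev_pair z) \<partial>mu)"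
proof -
  interpret prob_space mu by (rule prob_space_mu)
  have "(\<integral>\<^sup>+z. dnu z * F (rev_pair z) \<partial>mu) = (\<integral>\<^sup>+z. F (rev_pair z) \<partial>nu)"
    unfolding dnu_def by (rule RN_deriv_nn_integral[OF ratio_ac, symmetric]) (simp_all cong: measurable_cong_sets)
  also have "\<dots> = (\<integral>\<^sup>+z. F (rev_pair (rev_pair z)) \<partial>mu)"
    unfolding nu_eq_distr by (subst nn_integral_distr) (simp_all cong: measurable_cong_sets)
  finally show ?thesis by simp
qed

text \<open>Exchanging the two states turns \<open>\<pi>(dx) q(x, dy)\<close> into \<open>r(x, y) \<pi>(dx) q(x, dy)\<close>
  and \<open>r(y, x)\<close> into \<open>1 / r(x, y)\<close>; the symmetry assumed of the weight absorbs exactly this factor.\<close>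
lemma weighted_inner_swap:
  assumes Wm: "(\<lambda>p. W (fst p) (fst (snd p)) (snd (snd p))) \<in> borel_measurable (borel \<Otimes>\<^sub>M (borel \<Otimes>\<^sub>M borel))"
    and Wsym: "\<And>w u \<rho>. 0 \<le> w \<Longrightarrow> 0 \<le> u \<Longrightarrow> 0 < \<rho> \<Longrightarrow> ennreal \<rho> * W w u (1 / \<rho>) = W u w \<rho>"
    and h[measurable]: "h \<in> borel_measurable (E \<Otimes>\<^sub>M E)"
    and x: "x \<in> space \<pi>" and y: "y \<in> space \<pi>" and \<rho>: "0 < r x y" "r y x = 1 / r x y"
  shows "ennreal (r x y) * weighted_inner W (\<lambda>(z, z'). h (z', z)) (y, x) = weighted_inner W h (x, y)"
proof -
  define \<rho> where "\<rho> = r x y"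
  let ?f = "\<lambda>u w. W w u (1 / \<rho>) * h ((x, u), (y, w))"
  have mQ: "sets (Q x) = sets borel" "sets (Q y) = sets borel"
    using weight_distribution x y by auto
  have "(\<lambda>(u, w). ?f u w) \<in> borel_measurable (borel \<Otimes>\<^sub>M borel)"
    using x y by (simp add: case_prod_beta') (intro borel_measurable_times_ennreal measurable_weight_comp[OF Wm]; measurable)
  moreover have "sets (Q x \<Otimes>\<^sub>M Q y) = sets (borel \<Otimes>\<^sub>M borel)"
    using mQ by (intro sets_pair_measure_cong) auto
  ultimately have m2: "(\<lambda>(u, w). ?f u w) \<in> borel_measurable (Q x \<Otimes>\<^sub>M Q y)"
    by (simp cong: measurable_cong_sets)
  have m3: "?f u \<in> borel_measurable (Q y)" for u
    using x y mQ(2) by (simp cong: measurable_cong_sets) (intro borel_measurable_times_ennreal measurable_weight_comp[OF Wm]; measurable)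
  have m4: "(\<lambda>u. \<integral>\<^sup>+w. ?f u w \<partial>Q y) \<in> borel_measurable (Q x)"
    using sigma_finite_measure.borel_measurable_nn_integral_fst[OF _ m2] weight_distribution[OF y]
    by (simp add: prob_space_imp_sigma_finite)
  have "weighted_inner W (\<lambda>(z, z'). h (z', z)) (y, x) = (\<integral>\<^sup>+w. \<integral>\<^sup>+u. ?f u w \<partial>Q x \<partial>Q y)"
    using \<rho> by (simp add: weighted_inner_def \<rho>_def)
  also have "\<dots> = (\<integral>\<^sup>+u. \<integral>\<^sup>+w. ?f u w \<partial>Q y \<partial>Q x)"
    using weight_distribution x y
    by (intro nn_integral_swap_sigma_finite[OF _ _ m2]) (auto intro: prob_space_imp_sigma_finite)
  finally have "ennreal \<rho> * weighted_inner W (\<lambda>(z, z'). h (z', z)) (y, x)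
      = (\<integral>\<^sup>+u. \<integral>\<^sup>+w. ennreal \<rho> * ?f u w \<partial>Q y \<partial>Q x)"
    by (simp add: nn_integral_cmult[OF m4, symmetric] nn_integral_cmult[OF m3, symmetric])
  also have "\<dots> = (\<integral>\<^sup>+u. \<integral>\<^sup>+w. W u w \<rho> * h ((x, u), (y, w)) \<partial>Q y \<partial>Q x)"
  proof (rule nn_integral_cong_AE)
    show "AE u in Q x. (\<integral>\<^sup>+w. ennreal \<rho> * ?f u w \<partial>Q y) = (\<integral>\<^sup>+w. W u w \<rho> * h ((x, u), (y, w)) \<partial>Q y)"
      using weight_nonneg[OF x]
    proof eventually_elim
      case (elim u)
      show ?case
        using weight_nonneg[OF y] Wsym[of _ u \<rho>] \<rho>(1) elim
        by (intro nn_integral_cong_AE) (auto simp: \<rho>_def mult.assoc[symmetric] elim!: eventually_mono)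
    qed
  qed
  also have "\<dots> = weighted_inner W h (x, y)"
    by (simp add: weighted_inner_def \<rho>_def)
  finally show ?thesis
    by (simp add: \<rho>_def)
qed

lemma weighted_integral_swap:
  assumes Wm: "(\<lambda>p. W (fst p) (fst (snd p)) (snd (snd p))) \<in> borel_measurable (borel \<Otimes>\<^sub>M (borel \<Otimes>\<^sub>M borel))"
    and Wsym: "\<And>w u \<rho>. 0 \<le> w \<Longrightarrow> 0 \<le> u \<Longrightarrow> 0 < \<rho> \<Longrightarrow> ennreal \<rho> * W w u (1 / \<rho>) = W u w \<rho>"
    and h[measurable]: "h \<in> borel_measurable (E \<Otimes>\<^sub>M E)"
  shows "weighted_integral W (\<lambda>(z, z'). h (z', z)) = weighted_integral W h"
proof -
  let ?h = "\<lambda>(z, z'). h (z', z)"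
  have h'[measurable]: "?h \<in> borel_measurable (E \<Otimes>\<^sub>M E)"
    by measurable
  have "weighted_inner W ?h \<in> borel_measurable PP"
    unfolding weighted_inner_def
    by (rule measurable_weighted_inner, simp add: case_prod_beta')
      (intro borel_measurable_times_ennreal measurable_weight_comp[OF Wm]; measurable)
  then have "weighted_integral W ?h = (\<integral>\<^sup>+z. dnu z * weighted_inner W ?h (rev_pair z) \<partial>mu)"
    unfolding weighted_integral_mu[OF Wm h'] by (rule nn_integral_mu_dnu)
  also have "\<dots> = (\<integral>\<^sup>+z. weighted_inner W h z \<partial>mu)"
    using ratio_inverse_AE
  proof (intro nn_integral_cong_AE, elim AE_mp, intro AE_I2 impI)
    fix z assume z: "z \<in> space mu"
      and "0 < r (fst z) (snd z) \<and> r (snd z) (fst z) = 1 / r (fst z) (snd z) \<and> dnu z = ennreal (r (fst z) (snd z))"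
    then show "dnu z * weighted_inner W ?h (rev_pair z) = weighted_inner W h z"
      using weighted_inner_swap[OF Wm Wsym h, of "fst z" "snd z"]
      by (cases z) (simp add: rev_pair_def space_pair_measure)
  qed
  also have "\<dots> = weighted_integral W h"
    by (rule weighted_integral_mu[OF Wm h, symmetric])
  finally show ?thesis .
qed


definition "pm_weight = (\<lambda>w u \<rho>. ennreal w * ennreal (min 1 (\<rho> * (u / w))))"
definition "em_weight = (\<lambda>w u \<rho>. ennreal w * ennreal u * ennreal (min 1 \<rho>))"

lemma measurable_pm_weight: "(\<lambda>p. pm_weight (fst p) (fst (snd p)) (snd (snd p))) \<in> borel_measurable (borel \<Otimes>\<^sub>M (borel \<Otimes>\<^sub>M borel))"
  unfolding pm_weight_def by measurable
lemma measurable_em_weight: "(\<lambda>p. em_weight (fst p) (fst (snd p)) (snd (snd p))) \<in> borel_measurable (borel \<Otimes>\<^sub>M (borel \<Otimes>\<^sub>M borel))"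
  unfolding em_weight_def by measurable

lemma pm_weight_swap: "0 \<le> w \<Longrightarrow> 0 \<le> u \<Longrightarrow> 0 < \<rho> \<Longrightarrow> ennreal \<rho> * pm_weight w u (1 / \<rho>) = pm_weight u w \<rho>"
proof -
  assume w: "0 \<le> w" and u: "0 \<le> u" and p: "0 < \<rho>"
  have "\<rho> * (w * min 1 ((1 / \<rho>) * (u / w))) = u * min 1 (\<rho> * (w / u))"
  proof (cases "w = 0 \<or> u = 0")
    case True then show ?thesis by auto
  next
    case False
    then have w': "0 < w" and u': "0 < u" using w u by auto
    have "\<rho> * (w * min 1 ((1 / \<rho>) * (u / w))) = min (\<rho> * w) u"
      using w' p by (simp add: min_def field_simps)
    moreover have "u * min 1 (\<rho> * (w / u)) = min (\<rho> * w) u"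
      using u' p by (simp add: min_def field_simps)
    ultimately show ?thesis by simp
  qed
  moreover have "0 \<le> min 1 ((1 / \<rho>) * (u / w))" "0 \<le> min 1 (\<rho> * (w / u))" using w u p by auto
  ultimately show ?thesis using w u p
    unfolding pm_weight_def by (simp add: ennreal_mult[symmetric] mult.assoc)
qed

lemma em_weight_swap: "0 \<le> w \<Longrightarrow> 0 \<le> u \<Longrightarrow> 0 < \<rho> \<Longrightarrow> ennreal \<rho> * em_weight w u (1 / \<rho>) = em_weight u w \<rho>"
proof -
  assume w: "0 \<le> w" and u: "0 \<le> u" and p: "0 < \<rho>"
  have "\<rho> * (w * u * min 1 (1 / \<rho>)) = u * w * min 1 \<rho>"
    using p by (cases "\<rho> \<le> 1") (auto simp: min_def field_simps)
  then show ?thesis using w u p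
    unfolding em_weight_def by (simp add: ennreal_mult[symmetric] mult.assoc)
qed

lemma AE_pit_nonneg: "AE z in pit. 0 \<le> snd z"
proof -
  have S: "{z \<in> space pit. \<not> 0 \<le> snd z} \<in> sets pit" by measurable
  have "emeasure pit {z \<in> space pit. \<not> 0 \<le> snd z} = (\<integral>\<^sup>+z. indicator {z \<in> space E. snd z < 0} z \<partial>pit)"
    by (subst nn_integral_indicator) (use S in \<open>auto simp: not_le\<close>)
  also have "\<dots> = (\<integral>\<^sup>+x. \<integral>\<^sup>+w. ennreal w * indicator {z \<in> space E. snd z < 0} (x, w) \<partial>Q x \<partial>\<pi>)"
    by (rule nn_integral_pit) measurable
  also have "\<dots> = 0"
    by (subst nn_integral_cong[where v="\<lambda>_. 0"]) (auto simp: indicator_def ennreal_neg)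
  finally show ?thesis by (subst AE_iff_measurable[OF S refl]) simp
qed

lemma AE_pm_proposal_nonneg:
  assumes x: "x \<in> space \<pi>"
  shows "AE z' in pm_proposal (x, w). 0 \<le> snd z'"
proof -
  have "(\<lambda>y. distr (Q y) E (Pair y)) \<in> \<pi> \<rightarrow>\<^sub>M subprob_algebra E"
    by (rule measurable_prob_algebraD, rule measurable_distr_prob_space2[OF weight_kernel]) simp
  then have N: "(\<lambda>y. distr (Q y) E (Pair y)) \<in> q x \<rightarrow>\<^sub>M subprob_algebra E"
    using proposal_distribution[OF x] by (simp cong: measurable_cong_sets)
  have "AE y in q x. AE z' in distr (Q y) E (Pair y). 0 \<le> snd z'"
  proof (rule AE_I2)
    fix y assume "y \<in> space (q x)"
    then have y: "y \<in> space \<pi>" using x by simp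
    show "AE z' in distr (Q y) E (Pair y). 0 \<le> snd z'"
      using weight_nonneg[OF y] weight_distribution[OF y] y
      by (subst AE_distr_iff) (auto cong: measurable_cong_sets)
  qed
  moreover have eq: "pm_proposal (x, w) = q x \<bind> (\<lambda>y. distr (Q y) E (Pair y))"
    by (simp add: lifted_proposal_def)
  ultimately show ?thesis
    unfolding eq by (subst AE_bind[OF N]) simp_all
qed

lemma pm_metropolis: "metropolis_kernel pit pm_proposal pm_accept"
proof (intro metropolis_kernel.intro metropolis_kernel_axioms.intro)
  show "pm_proposal \<in> pit \<rightarrow>\<^sub>M prob_algebra pit"
    unfolding prob_algebra_pit measurable_cong_sets[OF sets_pit refl]
    by (rule lifted_proposal_kernel[OF weight_kernel])
  show "(\<lambda>(z, z'). pm_accept z z') \<in> borel_measurable (pit \<Otimes>\<^sub>M pit)"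
    unfolding measurable_cong_sets[OF sets_pit_pair refl] by (rule measurable_pm_accept)
  show "pm_accept z z' \<le> 1" for z z'
    by (simp add: pm_accept_def split: prod.splits)
  show "AE z in pit. AE z' in pm_proposal z. 0 \<le> pm_accept z z'"
    using AE_pit_nonneg
  proof (rule AE_mp[OF _ AE_I2[OF impI]])
    fix z :: "'a \<times> real" assume z: "z \<in> space pit" and w: "0 \<le> snd z"
    obtain x w where zxw: "z = (x, w)" by (cases z)
    have x: "x \<in> space \<pi>"
      using z zxw by (simp add: space_pair_measure)
    show "AE z' in pm_proposal z. 0 \<le> pm_accept z z'"
      unfolding zxw using AE_pm_proposal_nonneg[OF x, of w]
    proof (rule eventually_mono)
      fix z' :: "'a \<times> real" assume "0 \<le> snd z'"
      then show "0 \<le> pm_accept (x, w) z'"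
        using w zxw ratio_nonneg by (cases z') (simp add: pm_accept_def)
    qed
  qed
qed (rule prob_space_pit)

lemma em_metropolis: "metropolis_kernel pit em_proposal em_accept"
proof (intro metropolis_kernel.intro metropolis_kernel_axioms.intro)
  show "em_proposal \<in> pit \<rightarrow>\<^sub>M prob_algebra pit"
    unfolding prob_algebra_pit measurable_cong_sets[OF sets_pit refl]
    by (rule lifted_proposal_kernel[OF pitilde_x_kernel])
  show "(\<lambda>(z, z'). em_accept z z') \<in> borel_measurable (pit \<Otimes>\<^sub>M pit)"
    unfolding measurable_cong_sets[OF sets_pit_pair refl] by (rule measurable_em_accept)
  show "em_accept z z' \<le> 1" for z z'
    by (simp add: em_accept_def mh_accept_def split: prod.splits)
  show "AE z in pit. AE z' in em_proposal z. 0 \<le> em_accept z z'"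
    by (simp add: em_accept_def mh_accept_def mh_ratio_def split: prod.splits)
qed (rule prob_space_pit)

abbreviation "pm_edge \<equiv> edge_measure pit pm_proposal pm_accept"
abbreviation "em_edge \<equiv> edge_measure pit em_proposal em_accept"

lemma nn_integral_lifted_edge:
  assumes "metropolis_kernel pit (lifted_proposal R) \<alpha>" and R: "R \<in> \<pi> \<rightarrow>\<^sub>M prob_algebra borel"
    and h[measurable]: "h \<in> borel_measurable (E \<Otimes>\<^sub>M E)"
    and \<alpha>[measurable]: "(\<lambda>(z, z'). \<alpha> z z') \<in> borel_measurable (E \<Otimes>\<^sub>M E)"
  shows "(\<integral>\<^sup>+p. h p \<partial>edge_measure pit (lifted_proposal R) \<alpha>)
    = (\<integral>\<^sup>+x. \<integral>\<^sup>+w. \<integral>\<^sup>+y. \<integral>\<^sup>+u. ennreal w * (ennreal (\<alpha> (x, w) (y, u)) * h ((x, w), (y, u))) \<partial>R y \<partial>q x \<partial>Q x \<partial>\<pi>)"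
proof -
  have [measurable]: "R \<in> \<pi> \<rightarrow>\<^sub>M subprob_algebra borel"
    using R by (rule measurable_prob_algebraD)
  have [measurable]: "lifted_proposal R \<in> E \<rightarrow>\<^sub>M subprob_algebra E"
    using lifted_proposal_kernel[OF R] by (rule measurable_prob_algebraD)
  have "(\<integral>\<^sup>+p. h p \<partial>edge_measure pit (lifted_proposal R) \<alpha>)
      = (\<integral>\<^sup>+z. \<integral>\<^sup>+z'. ennreal (\<alpha> z z') * h (z, z') \<partial>lifted_proposal R z \<partial>pit)"
    by (rule metropolis_kernel.nn_integral_edge[OF assms(1)])
      (simp add: measurable_cong_sets[OF sets_pit_pair refl])
  also have "\<dots> = (\<integral>\<^sup>+x. \<integral>\<^sup>+w. ennreal w * (\<integral>\<^sup>+z'. ennreal (\<alpha> (x, w) z') * h ((x, w), z') \<partial>lifted_proposal R (x, w)) \<partial>Q x \<partial>\<pi>)"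
    by (rule nn_integral_pit) (rule nn_integral_measurable_subprob_algebra2; measurable)
  also have "\<dots> = (\<integral>\<^sup>+x. \<integral>\<^sup>+w. ennreal w * (\<integral>\<^sup>+y. \<integral>\<^sup>+u. ennreal (\<alpha> (x, w) (y, u)) * h ((x, w), (y, u)) \<partial>R y \<partial>q x) \<partial>Q x \<partial>\<pi>)"
    by (intro nn_integral_cong) (simp add: nn_integral_lifted_proposal[OF R])
  also have "\<dots> = (\<integral>\<^sup>+x. \<integral>\<^sup>+w. \<integral>\<^sup>+y. \<integral>\<^sup>+u. ennreal w * (ennreal (\<alpha> (x, w) (y, u)) * h ((x, w), (y, u))) \<partial>R y \<partial>q x \<partial>Q x \<partial>\<pi>)"
  proof (intro nn_integral_cong)
    fix x w assume x: "x \<in> space \<pi>"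
    have "(\<lambda>y. \<integral>\<^sup>+u. ennreal (\<alpha> (x, w) (y, u)) * h ((x, w), (y, u)) \<partial>R y) \<in> borel_measurable \<pi>"
      by (rule nn_integral_measurable_subprob_algebra2[where N=borel]) (use x in measurable)
    then have m: "(\<lambda>y. \<integral>\<^sup>+u. ennreal (\<alpha> (x, w) (y, u)) * h ((x, w), (y, u)) \<partial>R y) \<in> borel_measurable (q x)"
      using proposal_distribution[OF x] by (simp cong: measurable_cong_sets)
    have "ennreal w * (\<integral>\<^sup>+y. \<integral>\<^sup>+u. ennreal (\<alpha> (x, w) (y, u)) * h ((x, w), (y, u)) \<partial>R y \<partial>q x)
        = (\<integral>\<^sup>+y. ennreal w * (\<integral>\<^sup>+u. ennreal (\<alpha> (x, w) (y, u)) * h ((x, w), (y, u)) \<partial>R y) \<partial>q x)"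
      by (rule nn_integral_cmult[OF m, symmetric])
    also have "\<dots> = (\<integral>\<^sup>+y. \<integral>\<^sup>+u. ennreal w * (ennreal (\<alpha> (x, w) (y, u)) * h ((x, w), (y, u))) \<partial>R y \<partial>q x)"
    proof (intro nn_integral_cong nn_integral_cmult[symmetric])
      fix y assume "y \<in> space (q x)"
      then have "sets (R y) = sets borel"
        using x measurable_space[OF R] by (auto simp: space_prob_algebra)
      then show "(\<lambda>u. ennreal (\<alpha> (x, w) (y, u)) * h ((x, w), (y, u))) \<in> borel_measurable (R y)"
        using \<open>y \<in> space (q x)\<close> x by (simp cong: measurable_cong_sets)
    qed
    finally show "ennreal w * (\<integral>\<^sup>+y. \<integral>\<^sup>+u. ennreal (\<alpha> (x, w) (y, u)) * h ((x, w), (y, u)) \<partial>R y \<partial>q x)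
        = (\<integral>\<^sup>+y. \<integral>\<^sup>+u. ennreal w * (ennreal (\<alpha> (x, w) (y, u)) * h ((x, w), (y, u))) \<partial>R y \<partial>q x)" .
  qed
  finally show ?thesis .
qed

lemma nn_integral_pm_edge:
  assumes [measurable]: "h \<in> borel_measurable (E \<Otimes>\<^sub>M E)"
  shows "(\<integral>\<^sup>+p. h p \<partial>pm_edge) = weighted_integral pm_weight h"
proof -
  have "(\<integral>\<^sup>+p. h p \<partial>pm_edge) = (\<integral>\<^sup>+x. \<integral>\<^sup>+w. \<integral>\<^sup>+y. \<integral>\<^sup>+u.
      ennreal w * (ennreal (pm_accept (x, w) (y, u)) * h ((x, w), (y, u))) \<partial>Q y \<partial>q x \<partial>Q x \<partial>\<pi>)"
    by (rule nn_integral_lifted_edge[OF pm_metropolis weight_kernel]) measurable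
  then show ?thesis
    by (simp add: weighted_integral_def pm_weight_def pm_accept_def mult.assoc)
qed

lemma nn_integral_em_edge:
  assumes [measurable]: "h \<in> borel_measurable (E \<Otimes>\<^sub>M E)"
  shows "(\<integral>\<^sup>+p. h p \<partial>em_edge) = weighted_integral em_weight h"
proof -
  have "(\<integral>\<^sup>+p. h p \<partial>em_edge) = (\<integral>\<^sup>+x. \<integral>\<^sup>+w. \<integral>\<^sup>+y. \<integral>\<^sup>+u.
      ennreal w * (ennreal (em_accept (x, w) (y, u)) * h ((x, w), (y, u))) \<partial>pitilde_x Q y \<partial>q x \<partial>Q x \<partial>\<pi>)"
    by (rule nn_integral_lifted_edge[OF em_metropolis pitilde_x_kernel]) measurable
  also have "\<dots> = weighted_integral em_weight h"
    unfolding weighted_integral_def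
  proof (intro nn_integral_cong)
    fix x w y assume x: "x \<in> space \<pi>" and "y \<in> space (q x)"
    then have y: "y \<in> space \<pi>"
      by simp
    have "(\<lambda>u. ennreal w * (ennreal (em_accept (x, w) (y, u)) * h ((x, w), (y, u)))) \<in> borel_measurable borel"
      using x y by measurable
    then show "(\<integral>\<^sup>+u. ennreal w * (ennreal (em_accept (x, w) (y, u)) * h ((x, w), (y, u))) \<partial>pitilde_x Q y)
        = (\<integral>\<^sup>+u. em_weight w u (r x y) * h ((x, w), (y, u)) \<partial>Q y)"
      by (simp add: nn_integral_pitilde_x[OF y] em_weight_def em_accept_def mh_accept_def r_def ac_simps)
  qed
  finally show ?thesis .
qed

lemma reversible_mh_weighted:
  assumes "metropolis_kernel pit K \<alpha>"
    and edge_eq: "\<And>h. h \<in> borel_measurable (E \<Otimes>\<^sub>M E) \<Longrightarrow>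
      (\<integral>\<^sup>+p. h p \<partial>edge_measure pit K \<alpha>) = weighted_integral W h"
    and Wm: "(\<lambda>p. W (fst p) (fst (snd p)) (snd (snd p))) \<in> borel_measurable (borel \<Otimes>\<^sub>M (borel \<Otimes>\<^sub>M borel))"
    and Wsym: "\<And>w u \<rho>. 0 \<le> w \<Longrightarrow> 0 \<le> u \<Longrightarrow> 0 < \<rho> \<Longrightarrow> ennreal \<rho> * W w u (1 / \<rho>) = W u w \<rho>"
  shows "reversible_mh pit K \<alpha>"
proof -
  interpret metropolis_kernel pit K \<alpha> by fact
  have "distr edge (pit \<Otimes>\<^sub>M pit) (\<lambda>(z, z'). (z', z)) = edge"
  proof (rule measure_eqI)
    fix A assume "A \<in> sets (distr edge (pit \<Otimes>\<^sub>M pit) (\<lambda>(z, z'). (z', z)))"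
    then have A[measurable]: "A \<in> sets (E \<Otimes>\<^sub>M E)"
      using sets_pit_pair by simp
    have "emeasure (distr edge (pit \<Otimes>\<^sub>M pit) (\<lambda>(z, z'). (z', z))) A
        = (\<integral>\<^sup>+p. indicator A p \<partial>distr edge (pit \<Otimes>\<^sub>M pit) (\<lambda>(z, z'). (z', z)))"
      using sets_pit_pair by simp
    also have "\<dots> = (\<integral>\<^sup>+p. indicator A (snd p, fst p) \<partial>edge)"
      using sets_pit_pair by (subst nn_integral_distr) (simp_all add: case_prod_beta')
    also have "\<dots> = weighted_integral W (\<lambda>(z, z'). indicator A (z', z))"
      by (subst edge_eq[symmetric]) (simp_all add: case_prod_beta')
    also have "\<dots> = weighted_integral W (indicator A)"
      by (rule weighted_integral_swap[OF Wm Wsym]) simp_all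
    also have "\<dots> = emeasure edge A"
      using sets_pit_pair by (subst edge_eq[symmetric]) simp_all
    finally show "emeasure (distr edge (pit \<Otimes>\<^sub>M pit) (\<lambda>(z, z'). (z', z))) A = emeasure edge A" .
  qed simp
  then show ?thesis
    by unfold_locales
qed

sublocale pm: reversible_mh pit pm_proposal pm_accept
  using pm_metropolis nn_integral_pm_edge measurable_pm_weight pm_weight_swap
  by (rule reversible_mh_weighted)

sublocale em: reversible_mh pit em_proposal em_accept
  using em_metropolis nn_integral_em_edge measurable_em_weight em_weight_swap
  by (rule reversible_mh_weighted)

end

section \<open>Comparison of the Dirichlet forms\<close>

lemma acceptance_product_le:
  fixes w u \<rho> s :: real
  assumes "0 < w" "0 \<le> u" "w \<le> s" "u \<le> s" "0 \<le> \<rho>"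
  shows "w * u * min 1 \<rho> \<le> s * (w * min 1 (\<rho> * (u / w)))"
proof -
  have "w * u * min 1 \<rho> = min (w * u) (\<rho> * (w * u))"
    using assms min_mult_distrib_left[of "w * u" 1 \<rho>] by (simp add: mult.commute)
  also have "\<dots> \<le> min (s * w) (s * (\<rho> * u))"
  proof (rule min.mono)
    show "w * u \<le> s * w"
      using mult_left_mono[of u s w] assms by (simp add: mult.commute)
    show "\<rho> * (w * u) \<le> s * (\<rho> * u)"
      using mult_left_mono[OF mult_right_mono[of w s u], of \<rho>] assms by (simp add: ac_simps)
  qed
  also have "\<dots> = s * (w * min 1 (\<rho> * (u / w)))"
    using assms by (simp add: min_def field_simps)
  finally show ?thesis .
qed

lemma square_powr: "((x::real)\<^sup>2) powr p = \<bar>x\<bar> powr (2 * p)"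
proof -
  have "x\<^sup>2 = \<bar>x\<bar> powr 2"
    by (cases "x = 0") (simp_all add: power2_abs)
  then have "(x\<^sup>2) powr p = (\<bar>x\<bar> powr 2) powr p"
    by (simp only:)
  also have "\<dots> = \<bar>x\<bar> powr (2 * p)"
    by (rule powr_powr)
  finally show ?thesis .
qed

lemma lpnorm_double_square:
  assumes "0 < p"
  shows "(lpnorm \<mu> (2 * p) f)\<^sup>2 = (\<integral>z. ((f z)\<^sup>2) powr p \<partial>\<mu>) powr (1 / p)"
proof -
  have "(lpnorm \<mu> (2 * p) f)\<^sup>2 = ((\<integral>z. \<bar>f z\<bar> powr (2 * p) \<partial>\<mu>) powr (1 / (2 * p))) powr 2"
    unfolding lpnorm_def by (subst powr_numeral) simp_all
  also have "\<dots> = (\<integral>z. \<bar>f z\<bar> powr (2 * p) \<partial>\<mu>) powr (1 / p)"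
    using assms by (simp add: powr_powr)
  finally show ?thesis
    by (simp add: square_powr)
qed

lemma square_le_1_plus_powr: "1 < p \<Longrightarrow> (x::real)\<^sup>2 \<le> 1 + \<bar>x\<bar> powr (2 * p)"
proof (cases "\<bar>x\<bar> \<le> 1")
  case True
  then have "x\<^sup>2 \<le> 1"
    by (simp add: abs_square_le_1)
  moreover have "0 \<le> \<bar>x\<bar> powr (2 * p)"
    by simp
  ultimately show ?thesis
    by linarith
next
  case False
  assume p: "1 < p"
  have "x\<^sup>2 = \<bar>x\<bar> powr 2"
    using False by (simp add: power2_abs)
  also have "\<dots> \<le> \<bar>x\<bar> powr (2 * p)"
    using p False by (intro powr_mono) auto
  finally show ?thesis
    by simp
qed

lemma esssup_real:
  fixes f :: "'b \<Rightarrow> real"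
  assumes "prob_space \<mu>" and fm: "f \<in> borel_measurable \<mu>"
    and bounded: "esssup \<mu> (\<lambda>z. ereal \<bar>f z\<bar>) < \<infinity>"
  obtains a where "esssup \<mu> (\<lambda>z. ereal (f z)) = ereal a" and "AE z in \<mu>. f z \<le> a"
proof -
  interpret prob_space \<mu> by fact
  let ?e = "esssup \<mu> (\<lambda>z. ereal (f z))"
  have ae: "AE z in \<mu>. ereal (f z) \<le> ?e"
    by (rule esssup_AE)
  have "?e \<le> esssup \<mu> (\<lambda>z. ereal \<bar>f z\<bar>)"
    by (rule esssup_mono) (use fm in auto)
  then have "?e < \<infinity>"
    using bounded by (rule le_less_trans)
  moreover have "?e \<noteq> - \<infinity>"
  proof
    assume "?e = - \<infinity>"
    then have "AE z in \<mu>. False"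
      using ae by simp
    then show False
      using AE_False by simp
  qed
  ultimately obtain a where "?e = ereal a"
    by (cases ?e) auto
  with ae show ?thesis
    using that by simp
qed

lemma L0_2p_bounded:
  assumes "prob_space \<mu>" and f: "L0_2p \<mu> \<infinity> f"
  obtains a b where "AE z in \<mu>. f z \<le> a \<and> - f z \<le> b" and "oscnorm \<mu> f = a + b"
proof -
  have fm: "f \<in> borel_measurable \<mu>" and bounded: "esssup \<mu> (\<lambda>z. ereal \<bar>f z\<bar>) < \<infinity>"
    using f by (simp_all add: L0_2p_def)
  obtain a where a: "esssup \<mu> (\<lambda>z. ereal (f z)) = ereal a" "AE z in \<mu>. f z \<le> a"
    using esssup_real[OF assms(1) fm bounded] .
  obtain b where b: "esssup \<mu> (\<lambda>z. ereal (- f z)) = ereal b" "AE z in \<mu>. - f z \<le> b"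
    using esssup_real[of \<mu> "\<lambda>z. - f z"] assms(1) fm bounded by auto
  have "AE z in \<mu>. f z \<le> a \<and> - f z \<le> b"
    using a(2) b(2) by eventually_elim simp
  moreover have "oscnorm \<mu> f = a + b"
    by (simp add: oscnorm_def a(1) b(1))
  ultimately show ?thesis ..
qed

lemma L0_2p_square_integrable:
  assumes "prob_space \<mu>" and p: "1 < p" and f: "L0_2p \<mu> p f"
  shows "integrable \<mu> (\<lambda>z. (f z)\<^sup>2)"
proof -
  interpret prob_space \<mu> by fact
  have fm: "f \<in> borel_measurable \<mu>"
    using f by (simp add: L0_2p_def)
  show ?thesis
  proof (cases p)
    case (real p')
    have fp: "integrable \<mu> (\<lambda>z. \<bar>f z\<bar> powr (2 * p'))"
      using f real by (simp add: L0_2p_def)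
    show ?thesis
    proof (rule Bochner_Integration.integrable_bound[OF Bochner_Integration.integrable_add[OF integrable_const[of 1] fp]])
      show "AE z in \<mu>. norm ((f z)\<^sup>2) \<le> norm (1 + \<bar>f z\<bar> powr (2 * p'))"
        using square_le_1_plus_powr[of p'] p real by (auto intro!: AE_I2 simp del: powr_numeral)
    qed (use fm in simp)
  next
    case PInf
    then obtain a b where ab: "AE z in \<mu>. f z \<le> a \<and> - f z \<le> b"
      using L0_2p_bounded[OF assms(1)] f by blast
    show ?thesis
    proof (rule Bochner_Integration.integrable_bound[OF integrable_const[of "(\<bar>a\<bar> + \<bar>b\<bar>)\<^sup>2"]])
      show "AE z in \<mu>. norm ((f z)\<^sup>2) \<le> norm ((\<bar>a\<bar> + \<bar>b\<bar>)\<^sup>2)"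
        using ab by eventually_elim (simp add: abs_le_square_iff[symmetric], arith)
    qed (use fm in simp)
  qed (use p in simp)
qed

context pseudo_marginal
begin

lemma em_weight_le_pm_weight:
  assumes "w \<le> s" "u \<le> s" "0 \<le> \<rho>"
  shows "em_weight w u \<rho> \<le> ennreal s * pm_weight w u \<rho>"
proof (cases "0 < w \<and> 0 \<le> u")
  case True
  then have "em_weight w u \<rho> = ennreal (w * u * min 1 \<rho>)"
    using assms by (simp add: em_weight_def ennreal_mult)
  also have "\<dots> \<le> ennreal (s * (w * min 1 (\<rho> * (u / w))))"
    using assms True by (intro ennreal_leI acceptance_product_le) auto
  also have "\<dots> = ennreal s * pm_weight w u \<rho>"
    using assms True by (simp add: pm_weight_def ennreal_mult)
  finally show ?thesis .
qed (auto simp: em_weight_def ennreal_neg)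

lemma weighted_integral_mono:
  assumes "\<And>x w y u. W w u (r x y) * h ((x, w), (y, u)) \<le> W' w u (r x y) * h' ((x, w), (y, u))"
  shows "weighted_integral W h \<le> weighted_integral W' h'"
  unfolding weighted_integral_def by (intro nn_integral_mono assms)

definition heavy :: "real \<Rightarrow> ('a \<times> real) set" where
  "heavy s = space \<pi> \<times> {s..}"

definition "heavy_pairs s = {p \<in> space (E \<Otimes>\<^sub>M E). fst p \<in> heavy s \<or> snd p \<in> heavy s}"

lemma heavy_sets[measurable]: "heavy s \<in> sets E"
  unfolding heavy_def by (intro pair_measureI) auto

lemma heavy_pairs_sets[measurable]: "heavy_pairs s \<in> sets (E \<Otimes>\<^sub>M E)"
  unfolding heavy_pairs_def by measurable

lemma nn_integral_em_edge_le:
  assumes D[measurable]: "D \<in> borel_measurable (E \<Otimes>\<^sub>M E)"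
  shows "(\<integral>\<^sup>+p. D p \<partial>em_edge)
    \<le> ennreal s * (\<integral>\<^sup>+p. D p \<partial>pm_edge) + (\<integral>\<^sup>+p. indicator (heavy_pairs s) p * D p \<partial>em_edge)"
proof -
  let ?L = "space (E \<Otimes>\<^sub>M E) - heavy_pairs s"
  have "(\<integral>\<^sup>+p. D p \<partial>em_edge) = (\<integral>\<^sup>+p. indicator ?L p * D p + indicator (heavy_pairs s) p * D p \<partial>em_edge)"
    using sets_pit_pair by (intro nn_integral_cong) (auto simp: indicator_def heavy_pairs_def)
  also have "\<dots> = (\<integral>\<^sup>+p. indicator ?L p * D p \<partial>em_edge) + (\<integral>\<^sup>+p. indicator (heavy_pairs s) p * D p \<partial>em_edge)"
    using sets_pit_pair by (intro nn_integral_add) (simp_all cong: measurable_cong_sets)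
  also have "(\<integral>\<^sup>+p. indicator ?L p * D p \<partial>em_edge) = weighted_integral em_weight (\<lambda>p. indicator ?L p * D p)"
    by (rule nn_integral_em_edge) measurable
  also have "\<dots> \<le> weighted_integral pm_weight (\<lambda>p. ennreal s * D p)"
  proof (rule weighted_integral_mono)
    fix x w y u
    show "em_weight w u (r x y) * (indicator ?L ((x, w), (y, u)) * D ((x, w), (y, u)))
        \<le> pm_weight w u (r x y) * (ennreal s * D ((x, w), (y, u)))"
    proof (cases "((x, w), (y, u)) \<in> ?L")
      case True
      then have "em_weight w u (r x y) \<le> ennreal s * pm_weight w u (r x y)"
        using ratio_nonneg by (intro em_weight_le_pm_weight) (auto simp: heavy_pairs_def heavy_def space_pair_measure)
      then have "em_weight w u (r x y) * D ((x, w), (y, u)) \<le> ennreal s * pm_weight w u (r x y) * D ((x, w), (y, u))"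
        by (rule mult_right_mono) simp
      then show ?thesis
        using True by (simp add: ac_simps)
    qed simp
  qed
  also have "\<dots> = (\<integral>\<^sup>+p. ennreal s * D p \<partial>pm_edge)"
    by (rule nn_integral_pm_edge[symmetric]) measurable
  also have "\<dots> = ennreal s * (\<integral>\<^sup>+p. D p \<partial>pm_edge)"
    using sets_pit_pair by (intro nn_integral_cmult) (simp cong: measurable_cong_sets)
  finally show ?thesis
    by (simp add: add_right_mono)
qed

lemma dirichlet_em_le:
  fixes f :: "'a \<times> real \<Rightarrow> real" and R :: real
  assumes f[measurable]: "f \<in> borel_measurable E" and fi: "integrable pit f"
    and f2: "integrable pit (\<lambda>z. (f z)\<^sup>2)" and s: "0 < s" and R: "0 \<le> R"
    and tail: "(\<integral>\<^sup>+p. indicator (heavy_pairs s) p * ennreal ((f (fst p) - f (snd p))\<^sup>2) \<partial>em_edge)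
      \<le> ennreal (2 * R)"
  shows "dirichlet pit (Pbar \<pi> q Q) f \<le> s * dirichlet pit (Ptilde \<pi> q Q) f + R"
proof -
  let ?D = "\<lambda>p. (f (fst p) - f (snd p))\<^sup>2"
  have fm: "f \<in> borel_measurable pit"
    by simp
  note pm = pm.dirichlet_edge[OF fm fi f2] and em = em.dirichlet_edge[OF fm fi f2]
  have "ennreal (\<integral>p. ?D p \<partial>em_edge) = (\<integral>\<^sup>+p. ennreal (?D p) \<partial>em_edge)"
    by (rule nn_integral_eq_integral[OF em(1), symmetric]) simp
  also have "\<dots> \<le> ennreal s * (\<integral>\<^sup>+p. ennreal (?D p) \<partial>pm_edge) + ennreal (2 * R)"
    using nn_integral_em_edge_le[of "\<lambda>p. ennreal (?D p)" s] tail
    by (auto intro: order_trans add_left_mono)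
  also have "(\<integral>\<^sup>+p. ennreal (?D p) \<partial>pm_edge) = ennreal (\<integral>p. ?D p \<partial>pm_edge)"
    by (rule nn_integral_eq_integral[OF pm(1)]) simp
  also have "ennreal s * ennreal (\<integral>p. ?D p \<partial>pm_edge) + ennreal (2 * R)
      = ennreal (s * (\<integral>p. ?D p \<partial>pm_edge) + 2 * R)"
    using s R by (simp add: ennreal_mult ennreal_plus)
  finally have "(\<integral>p. ?D p \<partial>em_edge) \<le> s * (\<integral>p. ?D p \<partial>pm_edge) + 2 * R"
    using s R by (subst (asm) ennreal_le_iff) auto
  then show ?thesis
    unfolding Ptilde_eq Pbar_eq mh_kernel_cong_sets[OF sets_pit, symmetric] pm(2) em(2)
    by (simp add: field_simps)
qed

lemma tail_le_heavy_ends: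
  assumes f[measurable]: "f \<in> borel_measurable E"
  shows "(\<integral>\<^sup>+p. indicator (heavy_pairs s) p * ennreal ((f (fst p) - f (snd p))\<^sup>2) \<partial>em_edge)
    \<le> 4 * ((\<integral>\<^sup>+p. indicator (heavy s) (fst p) * ennreal ((f (fst p))\<^sup>2) \<partial>em_edge)
          + (\<integral>\<^sup>+p. indicator (heavy s) (snd p) * ennreal ((f (fst p))\<^sup>2) \<partial>em_edge))"
proof -
  let ?I = "\<lambda>z. indicator (heavy s) z :: ennreal" and ?F = "\<lambda>z. ennreal ((f z)\<^sup>2)"
  let ?g = "\<lambda>p. (?I (fst p) + ?I (snd p)) * ?F (fst p)"
  have gm: "?g \<in> borel_measurable (pit \<Otimes>\<^sub>M pit)"
    by measurable
  have pointwise: "indicator (heavy_pairs s) p * ennreal ((f (fst p) - f (snd p))\<^sup>2)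
      \<le> 2 * (?g p + ?g (snd p, fst p))" for p
  proof -
    have "indicator (heavy_pairs s) p \<le> ?I (fst p) + ?I (snd p)"
      by (auto simp: indicator_def heavy_pairs_def)
    moreover have "ennreal ((f (fst p) - f (snd p))\<^sup>2) \<le> ennreal (2 * ((f (fst p))\<^sup>2 + (f (snd p))\<^sup>2))"
      using square_diff_le[of "f (fst p)" "f (snd p)"] by (intro ennreal_leI) simp
    ultimately have "indicator (heavy_pairs s) p * ennreal ((f (fst p) - f (snd p))\<^sup>2)
        \<le> (?I (fst p) + ?I (snd p)) * ennreal (2 * ((f (fst p))\<^sup>2 + (f (snd p))\<^sup>2))"
      by (rule mult_mono) simp_all
    also have "\<dots> = (?I (fst p) + ?I (snd p)) * (2 * (?F (fst p) + ?F (snd p)))"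
      by (simp add: ennreal_mult ennreal_plus)
    finally show ?thesis
      by (simp add: algebra_simps)
  qed
  have "(\<integral>\<^sup>+p. indicator (heavy_pairs s) p * ennreal ((f (fst p) - f (snd p))\<^sup>2) \<partial>em_edge)
      \<le> (\<integral>\<^sup>+p. 2 * (?g p + ?g (snd p, fst p)) \<partial>em_edge)"
    by (intro nn_integral_mono pointwise)
  also have "\<dots> = 2 * ((\<integral>\<^sup>+p. ?g p \<partial>em_edge) + (\<integral>\<^sup>+p. ?g (snd p, fst p) \<partial>em_edge))"
    using gm by (simp add: nn_integral_cmult nn_integral_add)
  also have "(\<integral>\<^sup>+p. ?g (snd p, fst p) \<partial>em_edge) = (\<integral>\<^sup>+p. ?g p \<partial>em_edge)"
    by (rule em.nn_integral_edge_swap[OF gm])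
  also have "(\<integral>\<^sup>+p. ?g p \<partial>em_edge)
      = (\<integral>\<^sup>+p. ?I (fst p) * ?F (fst p) \<partial>em_edge) + (\<integral>\<^sup>+p. ?I (snd p) * ?F (fst p) \<partial>em_edge)"
    by (simp add: distrib_right nn_integral_add)
  finally show ?thesis
    by (simp add: mult_2[symmetric] mult.assoc[symmetric])
qed

lemma emeasure_pit_heavy: "emeasure pit (heavy s) = ennreal (measure pit (heavy s))"
  by (rule pm.emeasure_eq_measure)

lemma measure_pit_heavy: "(\<integral>x. measure (pitilde_x Q x) {s..} \<partial>\<pi>) = measure pit (heavy s)"
proof -
  have m: "(\<lambda>x. measure (pitilde_x Q x) {s..}) \<in> borel_measurable \<pi>"
    by (rule measure_measurable_subprob_algebra2[OF _ pitilde_x_subprob]) measurable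
  have "ennreal (measure (pitilde_x Q x) {s..}) = (\<integral>\<^sup>+w. ennreal w * indicator (heavy s) (x, w) \<partial>Q x)"
    if x: "x \<in> space \<pi>" for x
  proof -
    interpret prob_space "pitilde_x Q x"
      using pitilde_x_distribution[OF x] by blast
    have "ennreal (measure (pitilde_x Q x) {s..}) = emeasure (pitilde_x Q x) {s..}"
      by (simp add: emeasure_eq_measure)
    also have "\<dots> = (\<integral>\<^sup>+w. ennreal w * indicator (heavy s) (x, w) \<partial>Q x)"
      using x by (simp add: emeasure_pitilde_x heavy_def indicator_def)
    finally show ?thesis .
  qed
  then have "(\<integral>\<^sup>+x. ennreal (measure (pitilde_x Q x) {s..}) \<partial>\<pi>)
      = (\<integral>\<^sup>+x. \<integral>\<^sup>+w. ennreal w * indicator (heavy s) (x, w) \<partial>Q x \<partial>\<pi>)"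
    by (simp cong: nn_integral_cong)
  also have "\<dots> = (\<integral>\<^sup>+z. indicator (heavy s) z \<partial>pit)"
    by (rule nn_integral_pit[symmetric]) measurable
  finally show ?thesis
    using m by (simp add: integral_eq_nn_integral emeasure_pit_heavy)
qed

lemma nn_integral_heavy_fst_le:
  "(\<integral>\<^sup>+p. indicator (heavy s) (fst p) \<partial>em_edge) \<le> ennreal (measure pit (heavy s))"
  using em.nn_integral_edge_fst_le[of "indicator (heavy s)"] by (simp add: emeasure_pit_heavy)

lemma nn_integral_heavy_snd_le:
  "(\<integral>\<^sup>+p. indicator (heavy s) (snd p) \<partial>em_edge) \<le> ennreal (measure pit (heavy s))"
proof -
  have "(\<integral>\<^sup>+p. indicator (heavy s) (snd p) \<partial>em_edge) = (\<integral>\<^sup>+p. indicator (heavy s) (fst p) \<partial>em_edge)"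
    using em.nn_integral_edge_swap[of "\<lambda>p. indicator (heavy s) (fst p)"] by simp
  also have "\<dots> \<le> (\<integral>\<^sup>+z. indicator (heavy s) z \<partial>pit)"
    by (rule em.nn_integral_edge_fst_le) measurable
  finally show ?thesis
    by (simp add: emeasure_pit_heavy)
qed

lemma heavy_end_le_Holder:
  fixes p qq :: real
  assumes f[measurable]: "f \<in> borel_measurable E" and p: "1 < p" and pq: "1 / p + 1 / qq = 1"
    and fp: "integrable pit (\<lambda>z. \<bar>f z\<bar> powr (2 * p))"
    and e[measurable]: "e \<in> (E \<Otimes>\<^sub>M E) \<rightarrow>\<^sub>M E"
    and heavy_end: "(\<integral>\<^sup>+y. indicator (heavy s) (e y) \<partial>em_edge) \<le> ennreal (measure pit (heavy s))"
  shows "(\<integral>\<^sup>+y. indicator (heavy s) (e y) * ennreal ((f (fst y))\<^sup>2) \<partial>em_edge)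
    \<le> ennreal ((lpnorm pit (2 * p) f)\<^sup>2 * measure pit (heavy s) powr (1 / qq))"
proof -
  let ?F = "\<lambda>z. (f z)\<^sup>2" and ?G = "\<lambda>y. indicator (heavy s) (e y) :: real"
  have Fp: "integrable pit (\<lambda>z. ?F z powr p)"
    using fp by (simp add: square_powr)
  have "1 / qq = 1 - 1 / p"
    using pq by simp
  then have "0 < 1 / qq"
    using p by simp
  have "integrable em_edge ?G"
    using em.finite_measure_edge
    by (intro finite_measure.integrable_const_bound[where B=1]) (simp_all add: measurable_cong_sets[OF sets_pit_pair refl])
  then have "ennreal (\<integral>y. ?G y \<partial>em_edge) = (\<integral>\<^sup>+y. indicator (heavy s) (e y) \<partial>em_edge)"
    using nn_integral_eq_integral[of em_edge ?G] by (simp add: ennreal_indicator)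
  then have "ennreal (\<integral>y. ?G y \<partial>em_edge) \<le> ennreal (measure pit (heavy s))"
    using heavy_end by simp
  then have G: "(\<integral>y. ?G y \<partial>em_edge) \<le> measure pit (heavy s)"
    by (simp add: ennreal_le_iff)
  have "(\<integral>\<^sup>+y. indicator (heavy s) (e y) * ennreal (?F (fst y)) \<partial>em_edge)
      = (\<integral>\<^sup>+y. ennreal (?F (fst y) * ?G y) \<partial>em_edge)"
    by (intro nn_integral_cong) (simp add: indicator_def)
  also have "\<dots> \<le> ennreal ((\<integral>y. ?F (fst y) powr p \<partial>em_edge) powr (1 / p) * (\<integral>y. ?G y \<partial>em_edge) powr (1 / qq))"
    using em.finite_measure_edge p pq em.integrable_edge_fst[OF Fp]
    by (intro Holder_inequality_unit_factor) simp_all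
  also have "\<dots> \<le> ennreal ((\<integral>z. ?F z powr p \<partial>pit) powr (1 / p) * measure pit (heavy s) powr (1 / qq))"
    using em.integral_edge_fst_le[OF Fp] G p \<open>0 < 1 / qq\<close>
    by (intro ennreal_leI mult_mono powr_mono2) (simp_all add: integral_nonneg_AE)
  finally show ?thesis
    using p by (simp add: lpnorm_double_square)
qed

lemma tail_le_Lp:
  fixes p qq :: real
  assumes f[measurable]: "f \<in> borel_measurable E" and p: "1 < p" and pq: "1 / p + 1 / qq = 1"
    and fp: "integrable pit (\<lambda>z. \<bar>f z\<bar> powr (2 * p))"
  shows "(\<integral>\<^sup>+y. indicator (heavy_pairs s) y * ennreal ((f (fst y) - f (snd y))\<^sup>2) \<partial>em_edge)
    \<le> ennreal (2 * (4 * (lpnorm pit (2 * p) f)\<^sup>2 * measure pit (heavy s) powr (1 / qq)))"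
proof -
  define B where "B = (lpnorm pit (2 * p) f)\<^sup>2 * measure pit (heavy s) powr (1 / qq)"
  have "(\<integral>\<^sup>+y. indicator (heavy s) (fst y) \<partial>em_edge) \<le> ennreal (measure pit (heavy s))"
    by (rule nn_integral_heavy_fst_le)
  then have fst_end: "(\<integral>\<^sup>+y. indicator (heavy s) (fst y) * ennreal ((f (fst y))\<^sup>2) \<partial>em_edge) \<le> ennreal B"
    unfolding B_def by (intro heavy_end_le_Holder[OF f p pq fp]) simp_all
  have snd_end: "(\<integral>\<^sup>+y. indicator (heavy s) (snd y) * ennreal ((f (fst y))\<^sup>2) \<partial>em_edge) \<le> ennreal B"
    unfolding B_def by (intro heavy_end_le_Holder[OF f p pq fp] nn_integral_heavy_snd_le) simp
  have "(\<integral>\<^sup>+y. indicator (heavy_pairs s) y * ennreal ((f (fst y) - f (snd y))\<^sup>2) \<partial>em_edge)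
      \<le> 4 * ((\<integral>\<^sup>+y. indicator (heavy s) (fst y) * ennreal ((f (fst y))\<^sup>2) \<partial>em_edge)
          + (\<integral>\<^sup>+y. indicator (heavy s) (snd y) * ennreal ((f (fst y))\<^sup>2) \<partial>em_edge))"
    by (rule tail_le_heavy_ends[OF f])
  also have "\<dots> \<le> 4 * (ennreal B + ennreal B)"
    by (intro mult_left_mono add_mono fst_end snd_end) simp
  also have "\<dots> = ennreal (2 * (4 * B))"
  proof -
    have B0: "0 \<le> B"
      by (simp add: B_def)
    then have "ennreal B + ennreal B = ennreal (2 * B)"
      by (simp flip: ennreal_plus)
    then show ?thesis
      using B0 by (simp add: ennreal_mult)
  qed
  finally show ?thesis
    by (simp add: B_def mult.assoc)
qed

lemma tail_le_bounded:
  fixes a b :: real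
  assumes f[measurable]: "f \<in> borel_measurable E" and bounded: "AE z in pit. f z \<le> a \<and> - f z \<le> b"
  shows "(\<integral>\<^sup>+p. indicator (heavy_pairs s) p * ennreal ((f (fst p) - f (snd p))\<^sup>2) \<partial>em_edge)
    \<le> ennreal (2 * ((a + b)\<^sup>2 * measure pit (heavy s)))"
proof -
  let ?I = "\<lambda>z. indicator (heavy s) z :: ennreal" and ?c = "ennreal ((a + b)\<^sup>2)"
  have "AE p in em_edge. (f (fst p) \<le> a \<and> - f (fst p) \<le> b) \<and> (f (snd p) \<le> a \<and> - f (snd p) \<le> b)"
    using bounded by (intro em.AE_edge) simp_all
  then have "AE p in em_edge. indicator (heavy_pairs s) p * ennreal ((f (fst p) - f (snd p))\<^sup>2)
      \<le> (?I (fst p) + ?I (snd p)) * ?c"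
  proof eventually_elim
    case (elim p)
    then have "\<bar>f (fst p) - f (snd p)\<bar>\<^sup>2 \<le> (a + b)\<^sup>2"
      by (intro power_mono) auto
    moreover have "indicator (heavy_pairs s) p \<le> ?I (fst p) + ?I (snd p)"
      by (auto simp: indicator_def heavy_pairs_def)
    ultimately show ?case
      by (intro mult_mono ennreal_leI) simp_all
  qed
  then have "(\<integral>\<^sup>+p. indicator (heavy_pairs s) p * ennreal ((f (fst p) - f (snd p))\<^sup>2) \<partial>em_edge)
      \<le> (\<integral>\<^sup>+p. (?I (fst p) + ?I (snd p)) * ?c \<partial>em_edge)"
    by (rule nn_integral_mono_AE)
  also have "\<dots> = ((\<integral>\<^sup>+p. ?I (fst p) \<partial>em_edge) + (\<integral>\<^sup>+p. ?I (snd p) \<partial>em_edge)) * ?c"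
    by (simp add: nn_integral_multc nn_integral_add)
  also have "\<dots> \<le> (ennreal (measure pit (heavy s)) + ennreal (measure pit (heavy s))) * ?c"
    by (intro mult_right_mono add_mono nn_integral_heavy_fst_le nn_integral_heavy_snd_le) simp
  also have "\<dots> = ennreal (2 * ((a + b)\<^sup>2 * measure pit (heavy s)))"
    by (simp add: ennreal_mult ennreal_plus[symmetric] ac_simps del: ennreal_plus)
  finally show ?thesis .
qed

lemma tail_le_Phi:
  assumes p: "1 < p" and pq: "inverse p + ereal (1 / qq) = 1" and f: "L0_2p pit p f"
  shows "(\<integral>\<^sup>+y. indicator (heavy_pairs s) y * ennreal ((f (fst y) - f (snd y))\<^sup>2) \<partial>em_edge)
    \<le> ennreal (2 * (Phi pit p f * measure pit (heavy s) powr (1 / qq)))"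
proof -
  have [measurable]: "f \<in> borel_measurable E"
    using f by (simp add: L0_2p_def cong: measurable_cong_sets)
  show ?thesis
  proof (cases p)
    case PInf
    then have "qq = 1"
      using pq by simp
    obtain a b where "AE z in pit. f z \<le> a \<and> - f z \<le> b" and "oscnorm pit f = a + b"
      using L0_2p_bounded[OF prob_space_pit] f PInf by blast
    then show ?thesis
      using tail_le_bounded[of f a b s] PInf \<open>qq = 1\<close> by (simp add: Phi_def)
  next
    case (real p')
    then have "1 < p'"
      using p by simp
    moreover have "1 / p' + 1 / qq = 1"
      using pq real \<open>1 < p'\<close> by (simp add: divide_inverse one_ereal_def)
    moreover have "integrable pit (\<lambda>z. \<bar>f z\<bar> powr (2 * p'))"
      using f real by (simp add: L0_2p_def)
    ultimately show ?thesis
      using tail_le_Lp[of f p' qq s] real by (simp add: Phi_def)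
  qed (use p in simp)
qed

end

theorem theorem43:
  fixes \<pi> :: "'a measure" and q :: "'a \<Rightarrow> 'a measure" and Q :: "'a \<Rightarrow> real measure"
    and p :: ereal and qq :: real and s :: real and f :: "'a \<times> real \<Rightarrow> real"
  assumes "prob_space \<pi>"
    and "q \<in> \<pi> \<rightarrow>\<^sub>M prob_algebra \<pi>"
    and "Q \<in> \<pi> \<rightarrow>\<^sub>M prob_algebra borel"
    and "\<And>x. x \<in> space \<pi> \<Longrightarrow> AE w in Q x. 0 \<le> w"
    and "\<And>x. x \<in> space \<pi> \<Longrightarrow> integrable (Q x) (\<lambda>w. w)"
    and "\<And>x. x \<in> space \<pi> \<Longrightarrow> (\<integral> w. w \<partial>Q x) = 1"
    and "absolutely_continuous (prop_joint \<pi> q) (rev_joint \<pi> q)"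
    and "1 < p" and "1 \<le> qq" and "inverse p + ereal (1 / qq) = 1"
    and "0 < s"
    and "L0_2p (pitilde \<pi> Q) p f"
  shows "dirichlet (pitilde \<pi> Q) (Pbar \<pi> q Q) f
           \<le> s * dirichlet (pitilde \<pi> Q) (Ptilde \<pi> q Q) f
             + Phi (pitilde \<pi> Q) p f * (\<integral> x. measure (pitilde_x Q x) {s..} \<partial>\<pi>) powr (1 / qq)"
proof -
  interpret pseudo_marginal \<pi> q Q
    using assms(1-7) by (rule pseudo_marginal.intro)
  have f: "f \<in> borel_measurable E" "integrable pit f"
    using assms(12) by (simp_all add: L0_2p_def cong: measurable_cong_sets)
  have "0 \<le> Phi pit p f"
    by (simp add: Phi_def)
  then show ?thesis
    using dirichlet_em_le[OF f L0_2p_square_integrable[OF prob_space_pit assms(8,12)] assms(11)]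
      tail_le_Phi[OF assms(8,10,12)]
    by (simp add: measure_pit_heavy)
qed

end
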